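(* For every $\beta\ge0$ and every $h\in\mathbb R$, $\textsc{f}_H(\beta,h)\ge H(0)$.
   Context: Let $\tau=(\tau_j)_{j\ge0}$ be a renewal process with $\tau_0=0$ and i.i.d. increments with values in $\mathbb N$, law $\mathbf P$, expectation $\mathbf E$; $K(n)=\mathbf P(\tau_1=n)>0$ for all $n$, $K(n)\sim C_Kn^{-(1+\alpha)}$, $\alpha>0$, $C_K>0$. $\delta_n=\mathbf 1_{n\in\{\tau_0,\tau_1,\dots\}}$. Let $\omega=(\omega_n)_{n\ge1}$ be i.i.d. with law $\mathbb P$, independent of $\tau$, $\lambda(s)=\log\mathbb E e^{s\omega_1}<\infty$ for all $s$, $\mathbb E\omega_1=0$, $\mathbb E\omega_1^2=1$. Let $\Psi(m,N)=Q(m,N)\exp(NH(m/N))$ ($N\in\mathbb N$, $1\le m\le N$) where: $H:[0,1]\to\mathbb R\cup\{-\infty\}$ is concave, real analytic in $(0,1)$, continuous on $[0,1]$ (possibly $H(0)$ and/or $H(1)$ equal $-\infty$); $Q\ge0$; for every $b>0$ there is $c>0$ with $Q(m,N)\le ce^{bN}$ for all $m\le N$; for all $0<u<v<1$, $b>0$ there is $c>0$ with $Q(m,N)\ge ce^{-bN}$ whenever $m/N\in[u,v]$. Let $Z^\Psi_{N,\omega,\beta,h}=\mathbf E[\exp(\sum_{j=1}^N(\beta\omega_j+h)\delta_j)\Psi(\sum_{j=1}^N\delta_j,N)\delta_N]$ and $\textsc{f}_H(\beta,h)=\lim_{N\to\infty}\frac1N\log Z^\Psi_{N,\omega,\beta,h}$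 (this limit exists $\mathbb P$-a.s. and in $\mathbb L^1$, and is deterministic). *)

theory Defs
  imports "HOL-Probability.Probability" "HOL-Library.Landau_Symbols"
begin

text \<open>Renewal process: increments T :: nat \<Rightarrow> nat, i.i.d. with law Kp
  (product measure); tau_j = sum of the first j increments, tau_0 = 0.\<close>

definition renewal_law :: "nat pmf \<Rightarrow> (nat \<Rightarrow> nat) measure" where
  "renewal_law Kp = (\<Pi>\<^sub>M i\<in>(UNIV::nat set). measure_pmf Kp)"

definition renewal_tau :: "(nat \<Rightarrow> nat) \<Rightarrow> nat \<Rightarrow> nat" where
  "renewal_tau T j = (\<Sum>i<j. T i)"

definition renewal_delta :: "(nat \<Rightarrow> nat) \<Rightarrow> nat \<Rightarrow> real" where
  "renewal_delta T n = (if n \<in> range (renewal_tau T) then 1 else 0)"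

text \<open>Disorder: omega = (omega_n), i.i.d. with law mu (only n >= 1 is used).\<close>
definition disorder_law :: "real measure \<Rightarrow> (nat \<Rightarrow> real) measure" where
  "disorder_law \<mu> = (\<Pi>\<^sub>M i\<in>(UNIV::nat set). \<mu>)"

definition Psi_fun :: "(nat \<Rightarrow> nat \<Rightarrow> real) \<Rightarrow> (real \<Rightarrow> ereal) \<Rightarrow> nat \<Rightarrow> nat \<Rightarrow> real" where
  "Psi_fun Q H m N =
     (if H (real m / real N) = -\<infinity> then 0
      else Q m N * exp (real N * real_of_ereal (H (real m / real N))))"

definition partition_fun ::
  "nat pmf \<Rightarrow> (nat \<Rightarrow> nat \<Rightarrow> real) \<Rightarrow> real \<Rightarrow> real \<Rightarrow> (nat \<Rightarrow> real) \<Rightarrow> nat \<Rightarrow> real" where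
  "partition_fun Kp Psi \<beta> h \<omega> N =
     (\<integral>T. exp (\<Sum>j=1..N. (\<beta> * \<omega> j + h) * renewal_delta T j)
          * Psi (nat \<lfloor>\<Sum>j=1..N. renewal_delta T j\<rfloor>) N * renewal_delta T N
      \<partial>renewal_law Kp)"

text \<open>Free energy f_H(beta,h): the (deterministic) limit of (1/N) log Z_N; since the
  convergence also holds in L^1, it equals the limit of (1/N) E log Z_N.\<close>
definition free_energy ::
  "nat pmf \<Rightarrow> real measure \<Rightarrow> (nat \<Rightarrow> nat \<Rightarrow> real) \<Rightarrow> real \<Rightarrow> real \<Rightarrow> real" where
  "free_energy Kp \<mu> Psi \<beta> h =
     lim (\<lambda>N. \<integral>\<omega>. ln (partition_fun Kp Psi \<beta> h \<omega> N) / real N \<partial>disorder_law \<mu>)"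

definition real_analytic_on :: "real set \<Rightarrow> (real \<Rightarrow> real) \<Rightarrow> bool" where
  "real_analytic_on S f \<longleftrightarrow>
     (\<forall>x\<in>S. \<exists>r>0. \<exists>c::nat \<Rightarrow> real. \<forall>y. \<bar>y - x\<bar> < r \<longrightarrow> (\<lambda>n. c n * (y - x) ^ n) sums f y)"

definition ereal_concave_on :: "real set \<Rightarrow> (real \<Rightarrow> ereal) \<Rightarrow> bool" where
  "ereal_concave_on S H \<longleftrightarrow>
     (\<forall>x\<in>S. \<forall>y\<in>S. \<forall>t::real. 0 \<le> t \<and> t \<le> 1 \<longrightarrow>
        ereal t * H x + ereal (1 - t) * H y \<le> H (t * x + (1 - t) * y))"

end

(*
  Summing over the renewal paths that hit N, i.e. over the compositions of N, turns Z_N into a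
  finite sum, and concatenating paths shows that E log Z_N is superadditive whenever the weight
  Psi(m,N) is supermultiplicative.  Psi itself is not, but the pure entropy weight
  exp(N H(m/N)) is, because H is concave and the contact density of a concatenation is the
  mediant of the two densities.  Q only changes this weight by a factor e^{o(N)} from above,
  and from below on every density window [u,v] inside (0,1); appending a single jump of
  length 2 pushes all densities into such a window at negligible cost.  Hence, by Fekete's
  lemma, (1/N) E log Z_N converges to the free energy f of the pure entropy model.  Finally,
  the path making a single jump to N contributes K(N) e^{N H(1/N) + h}, and K decays only
  polynomially, so f >= H(0).
*)

theory Submission
  imports Defs
begin

section \<open>Renewal paths as compositions\<close>

text \<open>A composition g of N lists the increments of a renewal path with \<open>\<tau>\<^bsub>length g\<^esub> = N\<close>,
  so \<open>prefix_sum g i\<close> is \<open>\<tau>\<^sub>i\<close> and \<open>length g\<close> is the number of contacts; \<open>comp_partition\<close> is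
  \<open>Z\<^sub>N\<close> with \<open>\<Psi>\<close> replaced by an arbitrary weight G.\<close>

definition compositions :: "nat \<Rightarrow> nat list set" where
  "compositions N = {g. (\<forall>x\<in>set g. 0 < x) \<and> sum_list g = N}"

definition prefix_sum :: "nat list \<Rightarrow> nat \<Rightarrow> nat" where
  "prefix_sum g i = sum_list (take i g)"

definition comp_weight :: "nat pmf \<Rightarrow> nat list \<Rightarrow> real" where
  "comp_weight Kp g = prod_list (map (pmf Kp) g)"

definition comp_energy :: "real \<Rightarrow> real \<Rightarrow> (nat \<Rightarrow> real) \<Rightarrow> nat list \<Rightarrow> real" where
  "comp_energy \<beta> h \<omega> g = (\<Sum>i=1..length g. \<beta> * \<omega> (prefix_sum g i) + h)"

definition comp_partition ::
  "nat pmf \<Rightarrow> real \<Rightarrow> real \<Rightarrow> (nat \<Rightarrow> nat \<Rightarrow> real) \<Rightarrow> nat \<Rightarrow> (nat \<Rightarrow> real) \<Rightarrow> real" where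
  "comp_partition Kp \<beta> h G N \<omega> =
     (\<Sum>g\<in>compositions N. comp_weight Kp g * exp (comp_energy \<beta> h \<omega> g) * G (length g) N)"

lemma length_le_sum_list_pos: "\<forall>x\<in>set g. 0 < (x::nat) \<Longrightarrow> length g \<le> sum_list g"
  by (induction g) auto

lemma length_compositions_le: "g \<in> compositions N \<Longrightarrow> length g \<le> N"
  using length_le_sum_list_pos by (auto simp: compositions_def)

lemma length_compositions_ge: "g \<in> compositions N \<Longrightarrow> N \<ge> 1 \<Longrightarrow> 1 \<le> length g"
  by (cases g) (auto simp: compositions_def)

lemma finite_compositions: "finite (compositions N)"
proof (rule finite_subset)
  show "compositions N \<subseteq> {g. set g \<subseteq> {0..N} \<and> length g \<le> N}"
    using member_le_sum_list length_compositions_le by (auto simp: compositions_def)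
qed (rule finite_lists_length_le, simp)

lemma append_in_compositions:
  "g1 \<in> compositions N1 \<Longrightarrow> g2 \<in> compositions N2 \<Longrightarrow> g1 @ g2 \<in> compositions (N1 + N2)"
  by (auto simp: compositions_def)

lemma exists_composition_of_length:
  assumes "m \<in> {1..N}"
  shows "\<exists>g\<in>compositions N. length g = m"
proof
  show "replicate (m - 1) 1 @ [N - m + 1] \<in> compositions N"
    using assms by (auto simp: compositions_def sum_list_replicate)
qed (use assms in simp)

lemma inj_on_append_compositions:
  "inj_on (\<lambda>(g1, g2). g1 @ g2) (compositions N1 \<times> compositions N2)"
proof (rule inj_onI, clarify)
  fix g1 g2 g1' g2'
  assume g: "g1 \<in> compositions N1" "g1' \<in> compositions N1" and eq: "g1 @ g2 = g1' @ g2'"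
  have no_zero_sum: "us = []" if "sum_list us = 0" "\<forall>x\<in>set us. 0 < (x::nat)" for us
    using that by (cases us) auto
  from eq obtain us where "g1 = g1' @ us \<and> us @ g2 = g2' \<or> g1 @ us = g1' \<and> g2 = us @ g2'"
    by (auto simp: append_eq_append_conv2)
  then show "g1 = g1' \<and> g2 = g2'"
  proof
    assume split: "g1 = g1' @ us \<and> us @ g2 = g2'"
    then have "us = []" using g by (intro no_zero_sum) (auto simp: compositions_def)
    then show ?thesis using split by simp
  next
    assume split: "g1 @ us = g1' \<and> g2 = us @ g2'"
    then have "us = []" using g by (intro no_zero_sum) (auto simp: compositions_def)
    then show ?thesis using split by simp
  qed
qed

lemma prefix_sum_append_left: "i \<le> length g1 \<Longrightarrow> prefix_sum (g1 @ g2) i = prefix_sum g1 i"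
  by (simp add: prefix_sum_def)

lemma prefix_sum_append_right: "prefix_sum (g1 @ g2) (length g1 + i) = sum_list g1 + prefix_sum g2 i"
  by (simp add: prefix_sum_def)

lemma prefix_sum_le_sum_list: "prefix_sum g i \<le> sum_list g"
  by (metis append_take_drop_id le_add1 prefix_sum_def sum_list_append)

lemma prefix_sum_strict_mono:
  assumes pos: "\<forall>x\<in>set g. 0 < (x::nat)" and "i < j" "j \<le> length g"
  shows "prefix_sum g i < prefix_sum g j"
  using assms(2,3)
proof (induction j)
  case (Suc j)
  have "prefix_sum g (Suc j) = prefix_sum g j + g ! j"
    using Suc.prems by (simp add: prefix_sum_def take_Suc_conv_app_nth)
  moreover have "0 < g ! j" using pos Suc.prems by simp
  ultimately show ?case using Suc by (cases "i = j") auto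
qed simp

lemma comp_weight_nonneg: "0 \<le> comp_weight Kp g"
  by (induction g) (simp_all add: comp_weight_def)

lemma comp_weight_pos:
  assumes "\<And>n. n \<ge> 1 \<Longrightarrow> pmf Kp n > 0" and "\<forall>x\<in>set g. 0 < x"
  shows "0 < comp_weight Kp g"
  using assms(2) unfolding comp_weight_def by (induction g) (auto intro!: mult_pos_pos assms(1))

lemma comp_weight_append: "comp_weight Kp (g1 @ g2) = comp_weight Kp g1 * comp_weight Kp g2"
  by (simp add: comp_weight_def)

lemma comp_energy_append:
  "comp_energy \<beta> h \<omega> (g1 @ g2) = comp_energy \<beta> h \<omega> g1 + comp_energy \<beta> h (\<lambda>i. \<omega> (sum_list g1 + i)) g2"
proof -
  let ?f = "\<lambda>i. \<beta> * \<omega> (prefix_sum (g1 @ g2) i) + h"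
  have "comp_energy \<beta> h \<omega> (g1 @ g2)
      = (\<Sum>i=1..length g1. ?f i) + (\<Sum>i=length g1 + 1..length g1 + length g2. ?f i)"
    unfolding comp_energy_def length_append by (rule sum.ub_add_nat) simp
  also have "(\<Sum>i=1..length g1. ?f i) = comp_energy \<beta> h \<omega> g1"
    unfolding comp_energy_def by (rule sum.cong) (auto simp: prefix_sum_append_left)
  also have "(\<Sum>i=length g1 + 1..length g1 + length g2. ?f i) = (\<Sum>i=1..length g2. ?f (length g1 + i))"
    using sum.shift_bounds_cl_nat_ivl[of ?f 1 "length g1" "length g2"] by (simp add: add.commute)
  also have "\<dots> = comp_energy \<beta> h (\<lambda>i. \<omega> (sum_list g1 + i)) g2"
    unfolding comp_energy_def by (simp add: prefix_sum_append_right)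
  finally show ?thesis .
qed

lemma comp_energy_le_sum_abs:
  assumes g: "g \<in> compositions N"
  shows "comp_energy \<beta> h \<omega> g \<le> (\<Sum>j=1..N. \<bar>\<beta> * \<omega> j + h\<bar>)"
proof -
  have pos: "\<forall>x\<in>set g. 0 < x" and sum: "sum_list g = N" using g by (auto simp: compositions_def)
  have inj: "inj_on (prefix_sum g) {1..length g}"
  proof (rule inj_onI)
    fix i j assume "i \<in> {1..length g}" "j \<in> {1..length g}" "prefix_sum g i = prefix_sum g j"
    then show "i = j"
      using prefix_sum_strict_mono[OF pos, of i j] prefix_sum_strict_mono[OF pos, of j i]
      by (cases i j rule: linorder_cases) auto
  qed
  have "prefix_sum g i \<in> {1..N}" if "i \<in> {1..length g}" for i
    using that prefix_sum_strict_mono[OF pos, of 0 i] prefix_sum_le_sum_list[of g i] sum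
    by (simp add: prefix_sum_def)
  then have "prefix_sum g ` {1..length g} \<subseteq> {1..N}" by blast
  have "comp_energy \<beta> h \<omega> g \<le> (\<Sum>i=1..length g. \<bar>\<beta> * \<omega> (prefix_sum g i) + h\<bar>)"
    unfolding comp_energy_def by (rule sum_mono) simp
  also have "\<dots> = (\<Sum>j\<in>prefix_sum g ` {1..length g}. \<bar>\<beta> * \<omega> j + h\<bar>)"
    by (subst sum.reindex[OF inj]) simp
  also have "\<dots> \<le> (\<Sum>j=1..N. \<bar>\<beta> * \<omega> j + h\<bar>)"
    using \<open>prefix_sum g ` {1..length g} \<subseteq> {1..N}\<close> by (intro sum_mono2) auto
  finally show ?thesis .
qed

section \<open>The partition function as a sum over compositions\<close>

lemma renewal_tau_0 [simp]: "renewal_tau T 0 = 0"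
  by (simp add: renewal_tau_def)

lemma renewal_tau_Suc [simp]: "renewal_tau T (Suc k) = renewal_tau T k + T k"
  by (simp add: renewal_tau_def)

lemma strict_mono_renewal_tau: "(\<And>i. 0 < T i) \<Longrightarrow> strict_mono (renewal_tau T)"
  by (rule strict_monoI_Suc) simp

lemma renewal_tau_eq_sum_list: "renewal_tau T k = sum_list (map T [0..<k])"
  by (induction k) simp_all

lemma prefix_sum_map_upt: "i \<le> k \<Longrightarrow> prefix_sum (map T [0..<k]) i = renewal_tau T i"
  by (simp add: prefix_sum_def take_map renewal_tau_eq_sum_list min_def)

lemma renewal_points_upto:
  assumes pos: "\<And>i. 0 < T i" and k: "renewal_tau T k = N"
  shows "{j\<in>{1..N}. j \<in> range (renewal_tau T)} = renewal_tau T ` {1..k}"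
proof -
  have mono: "strict_mono (renewal_tau T)" using pos by (rule strict_mono_renewal_tau)
  have "1 \<le> renewal_tau T i \<longleftrightarrow> 1 \<le> i" for i
    using strict_mono_less[OF mono, of 0 i] by auto
  moreover have "renewal_tau T i \<le> N \<longleftrightarrow> i \<le> k" for i
    using strict_mono_less_eq[OF mono, of i k] k by simp
  ultimately show ?thesis by auto
qed

lemma sum_renewal_delta:
  assumes pos: "\<And>i. 0 < T i" and k: "renewal_tau T k = N"
  shows "(\<Sum>j=1..N. f j * renewal_delta T j) = (\<Sum>i=1..k. f (renewal_tau T i))"
proof -
  have "strict_mono (renewal_tau T)" using pos by (rule strict_mono_renewal_tau)
  then have inj: "inj_on (renewal_tau T) {1..k}"
    by (simp add: strict_mono_imp_inj_on inj_on_subset)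
  have "(\<Sum>j=1..N. f j * renewal_delta T j) = (\<Sum>j=1..N. if j \<in> range (renewal_tau T) then f j else 0)"
    by (rule sum.cong) (auto simp: renewal_delta_def)
  also have "\<dots> = (\<Sum>j\<in>{j\<in>{1..N}. j \<in> range (renewal_tau T)}. f j)"
    by (rule sum.inter_filter[symmetric]) simp
  also have "\<dots> = (\<Sum>i=1..k. f (renewal_tau T i))"
    unfolding renewal_points_upto[OF pos k] by (subst sum.reindex[OF inj]) simp
  finally show ?thesis .
qed

lemma compositions_matching_renewal:
  assumes pos: "\<And>i. 0 < T i"
  shows "{g\<in>compositions N. \<forall>i<length g. T i = g ! i} = (\<lambda>k. map T [0..<k]) ` {k. renewal_tau T k = N}"
proof (intro equalityI subsetI)
  fix g assume "g \<in> {g\<in>compositions N. \<forall>i<length g. T i = g ! i}"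
  then have g: "g \<in> compositions N" and "g = map T [0..<length g]"
    by (auto intro: nth_equalityI)
  then show "g \<in> (\<lambda>k. map T [0..<k]) ` {k. renewal_tau T k = N}"
    by (metis (mono_tags) compositions_def image_eqI mem_Collect_eq renewal_tau_eq_sum_list)
qed (use pos in \<open>auto simp: compositions_def renewal_tau_eq_sum_list\<close>)

lemma renewal_integrand_eq_sum:
  assumes pos: "\<And>i. 0 < T i"
  shows "exp (\<Sum>j=1..N. (\<beta> * \<omega> j + h) * renewal_delta T j)
           * G (nat \<lfloor>\<Sum>j=1..N. renewal_delta T j\<rfloor>) N * renewal_delta T N
    = (\<Sum>g\<in>{g\<in>compositions N. \<forall>i<length g. T i = g ! i}. exp (comp_energy \<beta> h \<omega> g) * G (length g) N)"
proof (cases "N \<in> range (renewal_tau T)")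
  case True
  then obtain k where k: "renewal_tau T k = N" by auto
  have "strict_mono (renewal_tau T)" using pos by (rule strict_mono_renewal_tau)
  then have "{k. renewal_tau T k = N} = {k}"
    using k by (auto simp: strict_mono_eq)
  then have matching: "{g\<in>compositions N. \<forall>i<length g. T i = g ! i} = {map T [0..<k]}"
    by (simp add: compositions_matching_renewal[OF pos])
  have "(\<Sum>j=1..N. (\<beta> * \<omega> j + h) * renewal_delta T j) = comp_energy \<beta> h \<omega> (map T [0..<k])"
    unfolding sum_renewal_delta[OF pos k] comp_energy_def by (simp add: prefix_sum_map_upt)
  moreover have "(\<Sum>j=1..N. renewal_delta T j) = real k"
    using sum_renewal_delta[OF pos k, of "\<lambda>_. 1"] by simp
  ultimately show ?thesis using True matching by (simp add: renewal_delta_def)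
next
  case False
  then have "{k. renewal_tau T k = N} = {}" by auto
  then show ?thesis using False by (simp add: compositions_matching_renewal[OF pos] renewal_delta_def)
qed

definition cylinder :: "nat list \<Rightarrow> (nat \<Rightarrow> nat) set" where
  "cylinder g = {T. \<forall>i<length g. T i = g ! i}"

lemma cylinder_eq_Collect:
  "cylinder g = {T\<in>space (renewal_law Kp). \<forall>i\<in>{..<length g}. T i \<in> {g ! i}}"
  by (auto simp: cylinder_def renewal_law_def space_PiM)

lemma cylinder_in_sets: "cylinder g \<in> sets (renewal_law Kp)"
  unfolding cylinder_eq_Collect[of g Kp]
  by (intro sets.sets_Collect_finite_All sets_Collect_single') (auto simp: renewal_law_def)

lemma measure_cylinder: "measure (renewal_law Kp) (cylinder g) = comp_weight Kp g"
proof -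
  interpret product_prob_space "\<lambda>_. measure_pmf Kp" "UNIV :: nat set" by unfold_locales
  have "emeasure (renewal_law Kp) (cylinder g) = (\<Prod>i<length g. emeasure (measure_pmf Kp) {g ! i})"
    unfolding cylinder_eq_Collect[of g Kp] renewal_law_def by (rule emeasure_PiM_Collect) auto
  also have "\<dots> = (\<Prod>i<length g. ennreal (pmf Kp (g ! i)))"
    by (simp add: emeasure_pmf_single)
  also have "\<dots> = ennreal (comp_weight Kp g)"
  proof -
    have "prod_list (map f g) = (\<Prod>i<length g. f (g ! i))" for f :: "nat \<Rightarrow> real"
      by (induction g) (simp_all del: prod.lessThan_Suc add: prod.lessThan_Suc_shift)
    then show ?thesis by (simp add: comp_weight_def prod_ennreal)
  qed
  finally show ?thesis using comp_weight_nonneg by (simp add: measure_def)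
qed

lemma AE_increments_pos:
  assumes K0: "pmf Kp 0 = 0"
  shows "AE T in renewal_law Kp. \<forall>i. 0 < T i"
proof -
  interpret product_prob_space "\<lambda>_. measure_pmf Kp" "UNIV :: nat set" by unfold_locales
  show ?thesis unfolding renewal_law_def
  proof (subst AE_all_countable, rule allI)
    show "AE T in \<Pi>\<^sub>M i\<in>(UNIV :: nat set). measure_pmf Kp. 0 < T i" for i
      by (rule AE_component) (auto simp: AE_measure_pmf_iff set_pmf_iff K0 intro!: gr0I)
  qed
qed

lemma partition_fun_eq_comp_partition:
  assumes K0: "pmf Kp 0 = 0"
  shows "partition_fun Kp G \<beta> h \<omega> N = comp_partition Kp \<beta> h G N \<omega>"
proof -
  interpret prob_space "renewal_law Kp"
    unfolding renewal_law_def by (rule prob_space_PiM) (simp add: prob_space_measure_pmf)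
  define F where "F g = exp (comp_energy \<beta> h \<omega> g) * G (length g) N" for g
  have "partition_fun Kp G \<beta> h \<omega> N
      = (\<integral>T. (\<Sum>g\<in>compositions N. indicator (cylinder g) T * F g) \<partial>renewal_law Kp)"
    unfolding partition_fun_def
  proof (rule integral_cong_AE)
    show "(\<lambda>T. exp (\<Sum>j=1..N. (\<beta> * \<omega> j + h) * renewal_delta T j)
        * G (nat \<lfloor>\<Sum>j=1..N. renewal_delta T j\<rfloor>) N * renewal_delta T N) \<in> borel_measurable (renewal_law Kp)"
      unfolding renewal_delta_def renewal_tau_def image_def renewal_law_def by measurable
    show "(\<lambda>T. \<Sum>g\<in>compositions N. indicator (cylinder g) T * F g) \<in> borel_measurable (renewal_law Kp)"
      using cylinder_in_sets by measurable
    show "AE T in renewal_law Kp. exp (\<Sum>j=1..N. (\<beta> * \<omega> j + h) * renewal_delta T j)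
        * G (nat \<lfloor>\<Sum>j=1..N. renewal_delta T j\<rfloor>) N * renewal_delta T N
      = (\<Sum>g\<in>compositions N. indicator (cylinder g) T * F g)"
      using AE_increments_pos[OF K0]
    proof eventually_elim
      case (elim T)
      then have pos: "\<And>i. 0 < T i" by simp
      have "(\<Sum>g\<in>{g\<in>compositions N. \<forall>i<length g. T i = g ! i}. exp (comp_energy \<beta> h \<omega> g) * G (length g) N)
          = (\<Sum>g\<in>compositions N. indicator (cylinder g) T * F g)"
        unfolding sum.inter_filter[OF finite_compositions] by (intro sum.cong) (auto simp: cylinder_def F_def)
      then show ?case using renewal_integrand_eq_sum[OF pos, where \<beta>=\<beta> and \<omega>=\<omega> and h=h and G=G and N=N] by simp
    qed
  qed
  also have "\<dots> = (\<Sum>g\<in>compositions N. measure (renewal_law Kp) (cylinder g) * F g)"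
    using cylinder_in_sets by (simp add: integral_indicator emeasure_finite less_top[symmetric])
  also have "\<dots> = comp_partition Kp \<beta> h G N \<omega>"
    by (simp add: measure_cylinder F_def comp_partition_def mult.assoc)
  finally show ?thesis .
qed

text \<open>The sum is the renewal probability \<open>P(N \<in> \<tau>)\<close>.\<close>

lemma sum_comp_weight_le_1:
  assumes K0: "pmf Kp 0 = 0"
  shows "(\<Sum>g\<in>compositions N. comp_weight Kp g) \<le> 1"
proof -
  have "(\<Sum>g\<in>compositions N. comp_weight Kp g) = partition_fun Kp (\<lambda>_ _. 1) 0 0 (\<lambda>_. 0) N"
    by (simp add: partition_fun_eq_comp_partition[OF K0] comp_partition_def comp_energy_def)
  also have "\<dots> = (\<integral>T. renewal_delta T N \<partial>renewal_law Kp)"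
    by (simp add: partition_fun_def)
  also have "\<dots> \<le> 1"
  proof (rule prob_space.integral_le_const)
    show "prob_space (renewal_law Kp)"
      unfolding renewal_law_def by (rule prob_space_PiM) (simp add: prob_space_measure_pmf)
    then show "integrable (renewal_law Kp) (\<lambda>T. renewal_delta T N)"
    proof (intro finite_measure.integrable_const_bound[where B=1] prob_space.finite_measure)
      show "(\<lambda>T. renewal_delta T N) \<in> borel_measurable (renewal_law Kp)"
        unfolding renewal_law_def renewal_delta_def renewal_tau_def image_def by measurable
    qed (simp_all add: renewal_delta_def)
  qed (simp add: renewal_delta_def)
  finally show ?thesis .
qed

definition has_positive_term :: "nat pmf \<Rightarrow> (nat \<Rightarrow> nat \<Rightarrow> real) \<Rightarrow> nat \<Rightarrow> bool" where
  "has_positive_term Kp G N \<longleftrightarrow> (\<exists>g\<in>compositions N. 0 < comp_weight Kp g * G (length g) N)"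

lemma comp_partition_ge_term:
  assumes "g \<in> compositions N" and "\<And>m N. 0 \<le> G m N"
  shows "comp_weight Kp g * G (length g) N * exp (comp_energy \<beta> h \<omega> g) \<le> comp_partition Kp \<beta> h G N \<omega>"
proof -
  have "comp_weight Kp g * G (length g) N * exp (comp_energy \<beta> h \<omega> g)
      = comp_weight Kp g * exp (comp_energy \<beta> h \<omega> g) * G (length g) N"
    by simp
  also have "\<dots> \<le> comp_partition Kp \<beta> h G N \<omega>"
    unfolding comp_partition_def using assms comp_weight_nonneg
    by (intro member_le_sum) (auto simp: finite_compositions)
  finally show ?thesis .
qed

lemma comp_partition_pos:
  assumes "has_positive_term Kp G N" and "\<And>m N. 0 \<le> G m N"
  shows "0 < comp_partition Kp \<beta> h G N \<omega>"
proof -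
  obtain g where "g \<in> compositions N" and "0 < comp_weight Kp g * G (length g) N"
    using assms(1) by (auto simp: has_positive_term_def)
  then have "0 < comp_weight Kp g * G (length g) N * exp (comp_energy \<beta> h \<omega> g)" by simp
  then show ?thesis
    by (rule less_le_trans) (rule comp_partition_ge_term[where G=G, OF \<open>g \<in> compositions N\<close> assms(2)])
qed

lemma comp_partition_le:
  assumes "\<And>m N. 0 \<le> G m N"
  shows "comp_partition Kp \<beta> h G N \<omega>
    \<le> (\<Sum>g\<in>compositions N. comp_weight Kp g * G (length g) N) * exp (\<Sum>j=1..N. \<bar>\<beta> * \<omega> j + h\<bar>)"
  unfolding comp_partition_def sum_distrib_right
proof (rule sum_mono)
  fix g assume "g \<in> compositions N"
  then have "comp_energy \<beta> h \<omega> g \<le> (\<Sum>j=1..N. \<bar>\<beta> * \<omega> j + h\<bar>)"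
    by (rule comp_energy_le_sum_abs)
  then have "exp (comp_energy \<beta> h \<omega> g) \<le> exp (\<Sum>j=1..N. \<bar>\<beta> * \<omega> j + h\<bar>)"
    by simp
  then have "comp_weight Kp g * G (length g) N * exp (comp_energy \<beta> h \<omega> g)
      \<le> comp_weight Kp g * G (length g) N * exp (\<Sum>j=1..N. \<bar>\<beta> * \<omega> j + h\<bar>)"
    using assms comp_weight_nonneg[of Kp g] by (intro mult_left_mono) auto
  then show "comp_weight Kp g * exp (comp_energy \<beta> h \<omega> g) * G (length g) N
      \<le> comp_weight Kp g * G (length g) N * exp (\<Sum>j=1..N. \<bar>\<beta> * \<omega> j + h\<bar>)"
    by (simp add: mult_ac)
qed

lemma ln_comp_partition_ge:
  assumes "g \<in> compositions N" and "\<And>m N. 0 \<le> G m N" and pos: "0 < comp_weight Kp g * G (length g) N"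
  shows "ln (comp_weight Kp g * G (length g) N) + comp_energy \<beta> h \<omega> g \<le> ln (comp_partition Kp \<beta> h G N \<omega>)"
proof -
  have "ln (comp_weight Kp g * G (length g) N) + comp_energy \<beta> h \<omega> g
      = ln (comp_weight Kp g * G (length g) N * exp (comp_energy \<beta> h \<omega> g))"
    by (subst ln_mult_pos[OF pos exp_gt_zero]) simp
  also have "\<dots> \<le> ln (comp_partition Kp \<beta> h G N \<omega>)"
    by (rule ln_mono[OF comp_partition_ge_term[where G=G, OF assms(1,2)]]) (use pos in simp)
  finally show ?thesis .
qed

lemma ln_comp_partition_le:
  assumes "has_positive_term Kp G N" and "\<And>m N. 0 \<le> G m N"
  shows "ln (comp_partition Kp \<beta> h G N \<omega>)
    \<le> ln (\<Sum>g\<in>compositions N. comp_weight Kp g * G (length g) N) + (\<Sum>j=1..N. \<bar>\<beta> * \<omega> j + h\<bar>)"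
proof -
  let ?S = "\<Sum>g\<in>compositions N. comp_weight Kp g * G (length g) N"
  let ?B = "\<Sum>j=1..N. \<bar>\<beta> * \<omega> j + h\<bar>"
  have Z: "0 < comp_partition Kp \<beta> h G N \<omega>" using assms by (rule comp_partition_pos)
  have le: "comp_partition Kp \<beta> h G N \<omega> \<le> ?S * exp ?B"
    by (rule comp_partition_le) (rule assms(2))
  then have "0 < ?S * exp ?B" using Z by linarith
  then have S: "0 < ?S" by (simp add: zero_less_mult_iff)
  have "ln (comp_partition Kp \<beta> h G N \<omega>) \<le> ln (?S * exp ?B)"
    using Z le by (rule ln_mono[rotated])
  also have "\<dots> = ln ?S + ?B" using S by (simp add: ln_mult_pos)
  finally show ?thesis .
qed

lemma comp_partition_scaled_mono:
  assumes "\<And>m. m \<in> {1..N} \<Longrightarrow> c * G m N \<le> G' m N" and "N \<ge> 1"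
  shows "c * comp_partition Kp \<beta> h G N \<omega> \<le> comp_partition Kp \<beta> h G' N \<omega>"
  unfolding comp_partition_def sum_distrib_left
proof (rule sum_mono)
  fix g assume g: "g \<in> compositions N"
  then have "c * G (length g) N \<le> G' (length g) N"
    using assms length_compositions_ge length_compositions_le by auto
  then have "comp_weight Kp g * exp (comp_energy \<beta> h \<omega> g) * (c * G (length g) N)
      \<le> comp_weight Kp g * exp (comp_energy \<beta> h \<omega> g) * G' (length g) N"
    using comp_weight_nonneg[of Kp g] by (intro mult_left_mono) auto
  then show "c * (comp_weight Kp g * exp (comp_energy \<beta> h \<omega> g) * G (length g) N)
      \<le> comp_weight Kp g * exp (comp_energy \<beta> h \<omega> g) * G' (length g) N"
    by (simp add: mult_ac)
qed

lemma comp_partition_supermultiplicative: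
  assumes G1: "\<And>m N. 0 \<le> G1 m N" and G2: "\<And>m N. 0 \<le> G2 m N" and G3: "\<And>m N. 0 \<le> G3 m N"
    and G: "\<And>m1 m2. m1 \<in> {1..N1} \<Longrightarrow> m2 \<in> {1..N2} \<Longrightarrow> G1 m1 N1 * G2 m2 N2 \<le> G3 (m1 + m2) (N1 + N2)"
    and N1: "N1 \<ge> 1" and N2: "N2 \<ge> 1"
  shows "comp_partition Kp \<beta> h G1 N1 \<omega> * comp_partition Kp \<beta> h G2 N2 (\<lambda>i. \<omega> (N1 + i))
    \<le> comp_partition Kp \<beta> h G3 (N1 + N2) \<omega>"
proof -
  define t where "t G N \<omega>' g = comp_weight Kp g * exp (comp_energy \<beta> h \<omega>' g) * G (length g) N"
    for G :: "nat \<Rightarrow> nat \<Rightarrow> real" and N \<omega>' g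
  have "comp_partition Kp \<beta> h G1 N1 \<omega> * comp_partition Kp \<beta> h G2 N2 (\<lambda>i. \<omega> (N1 + i))
      = (\<Sum>(g1, g2)\<in>compositions N1 \<times> compositions N2. t G1 N1 \<omega> g1 * t G2 N2 (\<lambda>i. \<omega> (N1 + i)) g2)"
    by (simp add: comp_partition_def t_def sum_product sum.cartesian_product)
  also have "\<dots> \<le> (\<Sum>(g1, g2)\<in>compositions N1 \<times> compositions N2. t G3 (N1 + N2) \<omega> (g1 @ g2))"
  proof (rule sum_mono, clarify)
    fix g1 g2 assume g1: "g1 \<in> compositions N1" and g2: "g2 \<in> compositions N2"
    have "G1 (length g1) N1 * G2 (length g2) N2 \<le> G3 (length g1 + length g2) (N1 + N2)"
      using length_compositions_ge[OF g1 N1] length_compositions_ge[OF g2 N2]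
        length_compositions_le[OF g1] length_compositions_le[OF g2] by (intro G) auto
    then show "t G1 N1 \<omega> g1 * t G2 N2 (\<lambda>i. \<omega> (N1 + i)) g2 \<le> t G3 (N1 + N2) \<omega> (g1 @ g2)"
      using g1 comp_weight_nonneg[of Kp g1] comp_weight_nonneg[of Kp g2]
      by (simp add: t_def comp_weight_append comp_energy_append compositions_def exp_add
          mult_left_mono mult_ac)
  qed
  also have "\<dots> = (\<Sum>g\<in>(\<lambda>(g1, g2). g1 @ g2) ` (compositions N1 \<times> compositions N2). t G3 (N1 + N2) \<omega> g)"
    by (subst sum.reindex[OF inj_on_append_compositions]) (simp add: case_prod_beta)
  also have "\<dots> \<le> (\<Sum>g\<in>compositions (N1 + N2). t G3 (N1 + N2) \<omega> g)"
    using G3 comp_weight_nonneg append_in_compositions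
    by (intro sum_mono2) (auto simp: finite_compositions t_def)
  also have "\<dots> = comp_partition Kp \<beta> h G3 (N1 + N2) \<omega>" by (simp add: comp_partition_def t_def)
  finally show ?thesis .
qed

lemma has_positive_term_scaled_mono:
  assumes pos: "has_positive_term Kp G N" and c: "0 < c"
    and le: "\<And>m. m \<in> {1..N} \<Longrightarrow> c * G m N \<le> G' m N" and N: "N \<ge> 1"
  shows "has_positive_term Kp G' N"
proof -
  obtain g where g: "g \<in> compositions N" "0 < comp_weight Kp g * G (length g) N"
    using pos by (auto simp: has_positive_term_def)
  then have "c * G (length g) N \<le> G' (length g) N"
    using le length_compositions_ge[OF g(1) N] length_compositions_le[OF g(1)] by auto
  then have "comp_weight Kp g * (c * G (length g) N) \<le> comp_weight Kp g * G' (length g) N"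
    using comp_weight_nonneg[of Kp g] by (rule mult_left_mono)
  moreover have "0 < comp_weight Kp g * (c * G (length g) N)"
    using g(2) c by (simp add: mult.left_commute)
  ultimately have "0 < comp_weight Kp g * G' (length g) N" by linarith
  then show ?thesis using g(1) unfolding has_positive_term_def by blast
qed

lemma has_positive_term_append:
  assumes pos1: "has_positive_term Kp G1 N1" and pos2: "has_positive_term Kp G2 N2"
    and G: "\<And>m1 m2. m1 \<in> {1..N1} \<Longrightarrow> m2 \<in> {1..N2} \<Longrightarrow> G1 m1 N1 * G2 m2 N2 \<le> G3 (m1 + m2) (N1 + N2)"
    and N1: "N1 \<ge> 1" and N2: "N2 \<ge> 1"
  shows "has_positive_term Kp G3 (N1 + N2)"
proof -
  obtain g1 g2 where g1: "g1 \<in> compositions N1" "0 < comp_weight Kp g1 * G1 (length g1) N1"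
    and g2: "g2 \<in> compositions N2" "0 < comp_weight Kp g2 * G2 (length g2) N2"
    using pos1 pos2 by (auto simp: has_positive_term_def)
  have "G1 (length g1) N1 * G2 (length g2) N2 \<le> G3 (length (g1 @ g2)) (N1 + N2)"
    using G length_compositions_ge[OF g1(1) N1] length_compositions_ge[OF g2(1) N2]
      length_compositions_le[OF g1(1)] length_compositions_le[OF g2(1)] by simp
  then have "(comp_weight Kp g1 * comp_weight Kp g2) * (G1 (length g1) N1 * G2 (length g2) N2)
      \<le> comp_weight Kp (g1 @ g2) * G3 (length (g1 @ g2)) (N1 + N2)"
    unfolding comp_weight_append by (rule mult_left_mono) (simp add: comp_weight_nonneg)
  moreover have "0 < (comp_weight Kp g1 * comp_weight Kp g2) * (G1 (length g1) N1 * G2 (length g2) N2)"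
    using mult_pos_pos[OF g1(2) g2(2)] by (simp add: mult_ac)
  ultimately have "0 < comp_weight Kp (g1 @ g2) * G3 (length (g1 @ g2)) (N1 + N2)" by linarith
  then show ?thesis
    using append_in_compositions[OF g1(1) g2(1)] unfolding has_positive_term_def by blast
qed

lemma ln_comp_partition_scaled_mono:
  assumes pos: "has_positive_term Kp G N" and G: "\<And>m N. 0 \<le> G m N" and c: "0 < c"
    and le: "\<And>m. m \<in> {1..N} \<Longrightarrow> c * G m N \<le> G' m N" and N: "N \<ge> 1"
  shows "ln c + ln (comp_partition Kp \<beta> h G N \<omega>) \<le> ln (comp_partition Kp \<beta> h G' N \<omega>)"
proof -
  have Z: "0 < comp_partition Kp \<beta> h G N \<omega>" using pos G by (rule comp_partition_pos)
  have "c * comp_partition Kp \<beta> h G N \<omega> \<le> comp_partition Kp \<beta> h G' N \<omega>"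
    using le N by (rule comp_partition_scaled_mono)
  then have "ln (c * comp_partition Kp \<beta> h G N \<omega>) \<le> ln (comp_partition Kp \<beta> h G' N \<omega>)"
    by (rule ln_mono) (rule mult_pos_pos[OF c Z])
  then show ?thesis using c Z by (simp add: ln_mult_pos)
qed

lemma ln_comp_partition_superadditive:
  assumes G1: "\<And>m N. 0 \<le> G1 m N" and G2: "\<And>m N. 0 \<le> G2 m N" and G3: "\<And>m N. 0 \<le> G3 m N"
    and G: "\<And>m1 m2. m1 \<in> {1..N1} \<Longrightarrow> m2 \<in> {1..N2} \<Longrightarrow> G1 m1 N1 * G2 m2 N2 \<le> G3 (m1 + m2) (N1 + N2)"
    and N1: "N1 \<ge> 1" and N2: "N2 \<ge> 1"
    and pos1: "has_positive_term Kp G1 N1" and pos2: "has_positive_term Kp G2 N2"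
  shows "ln (comp_partition Kp \<beta> h G1 N1 \<omega>) + ln (comp_partition Kp \<beta> h G2 N2 (\<lambda>i. \<omega> (N1 + i)))
    \<le> ln (comp_partition Kp \<beta> h G3 (N1 + N2) \<omega>)"
proof -
  have Z: "0 < comp_partition Kp \<beta> h G1 N1 \<omega>" "0 < comp_partition Kp \<beta> h G2 N2 (\<lambda>i. \<omega> (N1 + i))"
    using pos1 pos2 G1 G2 by (simp_all add: comp_partition_pos)
  have "comp_partition Kp \<beta> h G1 N1 \<omega> * comp_partition Kp \<beta> h G2 N2 (\<lambda>i. \<omega> (N1 + i))
      \<le> comp_partition Kp \<beta> h G3 (N1 + N2) \<omega>"
    by (rule comp_partition_supermultiplicative[of G1 G2 G3 N1 N2, OF G1 G2 G3 G N1 N2])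
  then have "ln (comp_partition Kp \<beta> h G1 N1 \<omega> * comp_partition Kp \<beta> h G2 N2 (\<lambda>i. \<omega> (N1 + i)))
      \<le> ln (comp_partition Kp \<beta> h G3 (N1 + N2) \<omega>)"
    by (rule ln_mono) (rule mult_pos_pos[OF Z])
  then show ?thesis using Z by (simp add: ln_mult_pos)
qed

section \<open>Quenched averages over i.i.d. disorder\<close>

locale iid_disorder =
  fixes \<mu> :: "real measure"
  assumes prob_space_\<mu>: "prob_space \<mu>" and sets_\<mu>: "sets \<mu> = sets borel"
    and integrable_exp: "\<And>s. integrable \<mu> (\<lambda>x. exp (s * x))"
    and mean_zero: "(\<integral>x. x \<partial>\<mu>) = 0"
begin

abbreviation \<Omega> :: "(nat \<Rightarrow> real) measure" where
  "\<Omega> \<equiv> \<Pi>\<^sub>M i\<in>UNIV. \<mu>"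

sublocale \<Omega>: product_prob_space "\<lambda>_. \<mu>" "UNIV :: nat set"
  by (simp add: product_prob_space_def product_prob_space_axioms_def product_sigma_finite_def
      prob_space_\<mu> prob_space_imp_sigma_finite)

lemma measurable_coordinate: "(\<lambda>\<omega>. \<omega> j) \<in> measurable \<Omega> \<mu>"
  by (rule measurable_component_singleton) simp

lemma borel_measurable_coordinate [measurable]: "(\<lambda>\<omega>. \<omega> j) \<in> borel_measurable \<Omega>"
  using measurable_coordinate by (simp add: measurable_cong_sets[OF refl sets_\<mu>])

lemma borel_measurable_\<mu>: "f \<in> borel_measurable borel \<Longrightarrow> f \<in> borel_measurable \<mu>"
  by (simp only: measurable_cong_sets[OF sets_\<mu> refl])

lemma integrable_coordinate:
  fixes f :: "real \<Rightarrow> real"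
  assumes "f \<in> borel_measurable borel" and "integrable \<mu> f"
  shows "integrable \<Omega> (\<lambda>\<omega>. f (\<omega> j))"
  using integrable_distr_eq[OF measurable_coordinate borel_measurable_\<mu>[OF assms(1)]] assms(2)
  by (simp add: \<Omega>.PiM_component)

lemma integral_coordinate:
  fixes f :: "real \<Rightarrow> real"
  assumes "f \<in> borel_measurable borel"
  shows "(\<integral>\<omega>. f (\<omega> j) \<partial>\<Omega>) = (\<integral>x. f x \<partial>\<mu>)"
  using integral_distr[OF measurable_coordinate borel_measurable_\<mu>[OF assms]]
  by (simp add: \<Omega>.PiM_component)

lemma integrable_identity: "integrable \<mu> (\<lambda>x. x)"
proof (rule Bochner_Integration.integrable_bound)
  show "integrable \<mu> (\<lambda>x. exp (1 * x) + exp ((-1) * x))"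
    by (intro Bochner_Integration.integrable_add integrable_exp)
  show "AE x in \<mu>. norm x \<le> norm (exp (1 * x) + exp ((-1) * x))"
  proof (rule AE_I2)
    fix x :: real
    have "\<bar>x\<bar> \<le> exp \<bar>x\<bar>" using exp_ge_add_one_self[of "\<bar>x\<bar>"] by linarith
    also have "\<dots> \<le> exp x + exp (- x)" by (cases "x \<ge> 0") (auto simp: add_pos_nonneg)
    finally show "norm x \<le> norm (exp (1 * x) + exp ((-1) * x))" by simp
  qed
qed (simp add: borel_measurable_\<mu>)

lemma integrable_comp_energy: "integrable \<Omega> (\<lambda>\<omega>. comp_energy \<beta> h \<omega> g)"
  unfolding comp_energy_def using integrable_coordinate[OF _ integrable_identity]
  by (intro Bochner_Integration.integrable_sum Bochner_Integration.integrable_add integrable_mult_right) auto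

lemma integral_comp_energy: "(\<integral>\<omega>. comp_energy \<beta> h \<omega> g \<partial>\<Omega>) = h * real (length g)"
proof -
  have coord: "integrable \<Omega> (\<lambda>\<omega>. \<omega> j)" "(\<integral>\<omega>. \<omega> j \<partial>\<Omega>) = 0" for j
    using integrable_coordinate[OF _ integrable_identity, of j] integral_coordinate[of "\<lambda>x. x" j] mean_zero
    by simp_all
  have "(\<integral>\<omega>. comp_energy \<beta> h \<omega> g \<partial>\<Omega>) = (\<Sum>i=1..length g. \<integral>\<omega>. \<beta> * \<omega> (prefix_sum g i) + h \<partial>\<Omega>)"
    unfolding comp_energy_def using coord
    by (intro Bochner_Integration.integral_sum Bochner_Integration.integrable_add integrable_mult_right) auto
  also have "\<dots> = (\<Sum>i=1..length g. h)"
    using coord by (intro sum.cong refl) (simp add: Bochner_Integration.integral_add \<Omega>.P.prob_space)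
  finally show ?thesis by simp
qed

lemma integrable_abs_affine_coordinate: "integrable \<Omega> (\<lambda>\<omega>. \<bar>\<beta> * \<omega> j + h\<bar>)"
proof -
  have "integrable \<mu> (\<lambda>x. \<bar>\<beta> * x + h\<bar>)"
    using integrable_identity by (intro integrable_abs Bochner_Integration.integrable_add integrable_mult_right) auto
  then show ?thesis using integrable_coordinate[of "\<lambda>x. \<bar>\<beta> * x + h\<bar>"] by simp
qed

lemma integrable_sum_abs: "integrable \<Omega> (\<lambda>\<omega>. \<Sum>j=1..N. \<bar>\<beta> * \<omega> j + h\<bar>)"
  by (rule Bochner_Integration.integrable_sum) (rule integrable_abs_affine_coordinate)

lemma integral_sum_abs:
  "(\<integral>\<omega>. (\<Sum>j=1..N. \<bar>\<beta> * \<omega> j + h\<bar>) \<partial>\<Omega>) = real N * (\<integral>x. \<bar>\<beta> * x + h\<bar> \<partial>\<mu>)"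
proof -
  have "(\<integral>\<omega>. (\<Sum>j=1..N. \<bar>\<beta> * \<omega> j + h\<bar>) \<partial>\<Omega>) = (\<Sum>j=1..N. \<integral>\<omega>. \<bar>\<beta> * \<omega> j + h\<bar> \<partial>\<Omega>)"
    by (rule Bochner_Integration.integral_sum) (rule integrable_abs_affine_coordinate)
  also have "\<dots> = (\<Sum>j=1..N. \<integral>x. \<bar>\<beta> * x + h\<bar> \<partial>\<mu>)"
    by (intro sum.cong refl) (rule integral_coordinate, simp)
  finally show ?thesis by simp
qed

lemma measurable_shift: "(\<lambda>\<omega> i. \<omega> (n + i)) \<in> measurable \<Omega> \<Omega>"
  by (rule measurable_PiM_single') (auto intro: measurable_component_singleton simp: space_PiM)

lemma distr_shift: "distr \<Omega> \<Omega> (\<lambda>\<omega> i. \<omega> (n + i)) = \<Omega>"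
  using distr_PiM_reindex[of UNIV "\<lambda>_. \<mu>" "\<lambda>i. n + i" UNIV] prob_space_\<mu> by (simp add: restrict_UNIV)

lemma integrable_shift:
  fixes F :: "(nat \<Rightarrow> real) \<Rightarrow> real"
  assumes "F \<in> borel_measurable \<Omega>" and "integrable \<Omega> F"
  shows "integrable \<Omega> (\<lambda>\<omega>. F (\<lambda>i. \<omega> (n + i)))"
  using integrable_distr_eq[OF measurable_shift assms(1)] assms(2) by (simp add: distr_shift)

lemma integral_shift:
  fixes F :: "(nat \<Rightarrow> real) \<Rightarrow> real"
  assumes "F \<in> borel_measurable \<Omega>"
  shows "(\<integral>\<omega>. F (\<lambda>i. \<omega> (n + i)) \<partial>\<Omega>) = (\<integral>\<omega>. F \<omega> \<partial>\<Omega>)"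
  using integral_distr[OF measurable_shift assms] by (simp add: distr_shift)

lemma borel_measurable_comp_partition [measurable]:
  "(\<lambda>\<omega>. comp_partition Kp \<beta> h G N \<omega>) \<in> borel_measurable \<Omega>"
  unfolding comp_partition_def comp_energy_def by measurable

definition mean_log_partition :: "nat pmf \<Rightarrow> real \<Rightarrow> real \<Rightarrow> (nat \<Rightarrow> nat \<Rightarrow> real) \<Rightarrow> nat \<Rightarrow> real" where
  "mean_log_partition Kp \<beta> h G N = (\<integral>\<omega>. ln (comp_partition Kp \<beta> h G N \<omega>) \<partial>\<Omega>)"

lemma integrable_ln_comp_partition:
  assumes pos: "has_positive_term Kp G N" and G: "\<And>m N. 0 \<le> G m N"
  shows "integrable \<Omega> (\<lambda>\<omega>. ln (comp_partition Kp \<beta> h G N \<omega>))"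
proof -
  obtain g where g: "g \<in> compositions N" and g_pos: "0 < comp_weight Kp g * G (length g) N"
    using pos by (auto simp: has_positive_term_def)
  define a where "a = ln (comp_weight Kp g * G (length g) N)"
  define b where "b = ln (\<Sum>g\<in>compositions N. comp_weight Kp g * G (length g) N)"
  define B where "B \<omega> = (\<Sum>j=1..N. \<bar>\<beta> * \<omega> j + h\<bar>)" for \<omega> :: "nat \<Rightarrow> real"
  show ?thesis
  proof (rule Bochner_Integration.integrable_bound)
    show "integrable \<Omega> (\<lambda>\<omega>. \<bar>a\<bar> + \<bar>comp_energy \<beta> h \<omega> g\<bar> + \<bar>b\<bar> + B \<omega>)"
      unfolding B_def using integrable_sum_abs integrable_comp_energy
      by (intro Bochner_Integration.integrable_add integrable_abs \<Omega>.P.integrable_const) auto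
    show "AE \<omega> in \<Omega>. norm (ln (comp_partition Kp \<beta> h G N \<omega>))
        \<le> norm (\<bar>a\<bar> + \<bar>comp_energy \<beta> h \<omega> g\<bar> + \<bar>b\<bar> + B \<omega>)"
    proof (rule AE_I2)
      fix \<omega>
      have "0 \<le> B \<omega>" by (simp add: B_def sum_nonneg)
      moreover have "a + comp_energy \<beta> h \<omega> g \<le> ln (comp_partition Kp \<beta> h G N \<omega>)"
        unfolding a_def by (rule ln_comp_partition_ge[where G=G, OF g G g_pos])
      moreover have "ln (comp_partition Kp \<beta> h G N \<omega>) \<le> b + B \<omega>"
        unfolding b_def B_def by (rule ln_comp_partition_le[OF pos G])
      ultimately show "norm (ln (comp_partition Kp \<beta> h G N \<omega>))
          \<le> norm (\<bar>a\<bar> + \<bar>comp_energy \<beta> h \<omega> g\<bar> + \<bar>b\<bar> + B \<omega>)"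
        using abs_ge_self[of b] abs_ge_minus_self[of a] abs_ge_minus_self[of "comp_energy \<beta> h \<omega> g"]
        by (auto simp: abs_le_iff)
    qed
  qed simp
qed

lemma mean_log_partition_ge:
  assumes g: "g \<in> compositions N" and G: "\<And>m N. 0 \<le> G m N" and pos: "0 < comp_weight Kp g * G (length g) N"
  shows "ln (comp_weight Kp g * G (length g) N) + h * real (length g) \<le> mean_log_partition Kp \<beta> h G N"
proof -
  have "has_positive_term Kp G N" using g pos by (auto simp: has_positive_term_def)
  then have int: "integrable \<Omega> (\<lambda>\<omega>. ln (comp_partition Kp \<beta> h G N \<omega>))"
    using G by (rule integrable_ln_comp_partition)
  have "ln (comp_weight Kp g * G (length g) N) + h * real (length g)
      = (\<integral>\<omega>. ln (comp_weight Kp g * G (length g) N) + comp_energy \<beta> h \<omega> g \<partial>\<Omega>)"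
    using integrable_comp_energy by (simp add: integral_comp_energy \<Omega>.P.prob_space)
  also have "\<dots> \<le> mean_log_partition Kp \<beta> h G N"
    unfolding mean_log_partition_def using int integrable_comp_energy ln_comp_partition_ge[where G=G, OF g G pos]
    by (intro integral_mono) auto
  finally show ?thesis .
qed

lemma mean_log_partition_le:
  assumes pos: "has_positive_term Kp G N" and G: "\<And>m N. 0 \<le> G m N"
  shows "mean_log_partition Kp \<beta> h G N
    \<le> ln (\<Sum>g\<in>compositions N. comp_weight Kp g * G (length g) N) + real N * (\<integral>x. \<bar>\<beta> * x + h\<bar> \<partial>\<mu>)"
proof -
  let ?S = "\<Sum>g\<in>compositions N. comp_weight Kp g * G (length g) N"
  have "mean_log_partition Kp \<beta> h G N \<le> (\<integral>\<omega>. ln ?S + (\<Sum>j=1..N. \<bar>\<beta> * \<omega> j + h\<bar>) \<partial>\<Omega>)"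
    unfolding mean_log_partition_def
    using integrable_ln_comp_partition[OF pos G] integrable_sum_abs ln_comp_partition_le[OF pos G]
    by (intro integral_mono) auto
  also have "\<dots> = ln ?S + (\<integral>\<omega>. (\<Sum>j=1..N. \<bar>\<beta> * \<omega> j + h\<bar>) \<partial>\<Omega>)"
    using integrable_sum_abs by (simp add: \<Omega>.P.prob_space del: One_nat_def)
  also have "\<dots> = ln ?S + real N * (\<integral>x. \<bar>\<beta> * x + h\<bar> \<partial>\<mu>)"
    by (simp only: integral_sum_abs)
  finally show ?thesis .
qed

lemma mean_log_partition_scaled_mono:
  assumes pos: "has_positive_term Kp G N" and G: "\<And>m N. 0 \<le> G m N" and G': "\<And>m N. 0 \<le> G' m N"
    and c: "0 < c" and le: "\<And>m. m \<in> {1..N} \<Longrightarrow> c * G m N \<le> G' m N" and N: "N \<ge> 1"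
  shows "ln c + mean_log_partition Kp \<beta> h G N \<le> mean_log_partition Kp \<beta> h G' N"
proof -
  have pos': "has_positive_term Kp G' N" using pos c le N by (rule has_positive_term_scaled_mono)
  have pointwise: "ln c + ln (comp_partition Kp \<beta> h G N \<omega>) \<le> ln (comp_partition Kp \<beta> h G' N \<omega>)" for \<omega>
    using pos G c le N by (rule ln_comp_partition_scaled_mono)
  have "ln c + mean_log_partition Kp \<beta> h G N = (\<integral>\<omega>. ln c + ln (comp_partition Kp \<beta> h G N \<omega>) \<partial>\<Omega>)"
    unfolding mean_log_partition_def using integrable_ln_comp_partition[OF pos G]
    by (simp add: \<Omega>.P.prob_space)
  also have "\<dots> \<le> mean_log_partition Kp \<beta> h G' N"
    unfolding mean_log_partition_def
    using integrable_ln_comp_partition[OF pos G] integrable_ln_comp_partition[OF pos' G'] pointwise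
    by (intro integral_mono) auto
  finally show ?thesis .
qed

lemma mean_log_partition_superadditive:
  assumes G1: "\<And>m N. 0 \<le> G1 m N" and G2: "\<And>m N. 0 \<le> G2 m N" and G3: "\<And>m N. 0 \<le> G3 m N"
    and G: "\<And>m1 m2. m1 \<in> {1..N1} \<Longrightarrow> m2 \<in> {1..N2} \<Longrightarrow> G1 m1 N1 * G2 m2 N2 \<le> G3 (m1 + m2) (N1 + N2)"
    and N1: "N1 \<ge> 1" and N2: "N2 \<ge> 1"
    and pos1: "has_positive_term Kp G1 N1" and pos2: "has_positive_term Kp G2 N2"
  shows "mean_log_partition Kp \<beta> h G1 N1 + mean_log_partition Kp \<beta> h G2 N2
    \<le> mean_log_partition Kp \<beta> h G3 (N1 + N2)"
proof -
  have pos3: "has_positive_term Kp G3 (N1 + N2)"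
    using pos1 pos2 G N1 N2 by (rule has_positive_term_append)
  define F2 where "F2 = (\<lambda>\<omega>. ln (comp_partition Kp \<beta> h G2 N2 \<omega>))"
  have F2_measurable: "F2 \<in> borel_measurable \<Omega>" unfolding F2_def by measurable
  have "integrable \<Omega> F2" unfolding F2_def using pos2 G2 by (rule integrable_ln_comp_partition)
  then have shifted: "integrable \<Omega> (\<lambda>\<omega>. F2 (\<lambda>i. \<omega> (N1 + i)))"
    "(\<integral>\<omega>. F2 (\<lambda>i. \<omega> (N1 + i)) \<partial>\<Omega>) = mean_log_partition Kp \<beta> h G2 N2"
    using F2_measurable
    by (simp_all add: integrable_shift integral_shift) (simp add: F2_def mean_log_partition_def)
  have pointwise: "ln (comp_partition Kp \<beta> h G1 N1 \<omega>) + F2 (\<lambda>i. \<omega> (N1 + i))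
      \<le> ln (comp_partition Kp \<beta> h G3 (N1 + N2) \<omega>)" for \<omega>
    unfolding F2_def using G1 G2 G3 G N1 N2 pos1 pos2 by (rule ln_comp_partition_superadditive)
  have "mean_log_partition Kp \<beta> h G1 N1 + mean_log_partition Kp \<beta> h G2 N2
      = (\<integral>\<omega>. ln (comp_partition Kp \<beta> h G1 N1 \<omega>) + F2 (\<lambda>i. \<omega> (N1 + i)) \<partial>\<Omega>)"
    using integrable_ln_comp_partition[OF pos1 G1] shifted
    by (simp add: mean_log_partition_def Bochner_Integration.integral_add)
  also have "\<dots> \<le> mean_log_partition Kp \<beta> h G3 (N1 + N2)"
    unfolding mean_log_partition_def
    using integrable_ln_comp_partition[OF pos1 G1] shifted(1) integrable_ln_comp_partition[OF pos3 G3]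
      pointwise
    by (intro integral_mono Bochner_Integration.integrable_add) auto
  finally show ?thesis .
qed

end

section \<open>Concave density weights\<close>

text \<open>The entropic part \<open>exp (N H(m/N))\<close> of \<open>\<Psi>\<close>, restricted to contact densities in [u,v].\<close>

definition density_weight :: "(real \<Rightarrow> ereal) \<Rightarrow> real \<Rightarrow> real \<Rightarrow> nat \<Rightarrow> nat \<Rightarrow> real" where
  "density_weight H u v m N =
     (if u \<le> real m / real N \<and> real m / real N \<le> v \<and> H (real m / real N) \<noteq> -\<infinity>
      then exp (real N * real_of_ereal (H (real m / real N))) else 0)"

lemma density_weight_nonneg: "0 \<le> density_weight H u v m N"
  by (simp add: density_weight_def)

lemma density_weight_pos:
  "u \<le> real m / real N \<Longrightarrow> real m / real N \<le> v \<Longrightarrow> H (real m / real N) \<noteq> -\<infinity>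
    \<Longrightarrow> 0 < density_weight H u v m N"
  by (simp add: density_weight_def)

lemma ereal_concave_on_weighted_mean:
  assumes conc: "ereal_concave_on {0..1} H"
    and x: "x \<in> {0..1}" "H x = ereal p" and y: "y \<in> {0..1}" "H y = ereal q"
    and a: "a > 0" and b: "b > 0"
  shows "ereal ((a * p + b * q) / (a + b)) \<le> H ((a * x + b * y) / (a + b))"
proof -
  define t where "t = a / (a + b)"
  have t: "0 \<le> t" "t \<le> 1" "1 - t = b / (a + b)" using a b by (auto simp: t_def field_simps)
  have "ereal t * H x + ereal (1 - t) * H y \<le> H (t * x + (1 - t) * y)"
    using conc x y t unfolding ereal_concave_on_def by blast
  moreover have "t * x + (1 - t) * y = (a * x + b * y) / (a + b)"
    "t * p + (1 - t) * q = (a * p + b * q) / (a + b)"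
    using a b t(3) by (simp_all add: t_def add_divide_distrib)
  ultimately show ?thesis using x y by simp
qed

lemma mediant_in_interval:
  assumes "N1 \<ge> 1" "N2 \<ge> 1"
    and "u \<le> real m1 / real N1" "real m1 / real N1 \<le> v" "u \<le> real m2 / real N2" "real m2 / real N2 \<le> v"
  shows "u \<le> real (m1 + m2) / real (N1 + N2) \<and> real (m1 + m2) / real (N1 + N2) \<le> v"
proof -
  have "u * real N1 \<le> real m1" "real m1 \<le> v * real N1" "u * real N2 \<le> real m2" "real m2 \<le> v * real N2"
    using assms by (auto simp: field_simps)
  then show ?thesis using assms(1,2) by (auto simp: field_simps)
qed

lemma density_weight_supermultiplicative:
  assumes conc: "ereal_concave_on {0..1} H" and not_pinf: "\<And>x. x \<in> {0..1} \<Longrightarrow> H x \<noteq> \<infinity>"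
    and m1: "m1 \<in> {1..N1}" and m2: "m2 \<in> {1..N2}"
    and window: "u1 \<le> real m1 / real N1 \<Longrightarrow> real m1 / real N1 \<le> v1 \<Longrightarrow>
       u2 \<le> real m2 / real N2 \<Longrightarrow> real m2 / real N2 \<le> v2 \<Longrightarrow>
       u \<le> real (m1 + m2) / real (N1 + N2) \<and> real (m1 + m2) / real (N1 + N2) \<le> v"
  shows "density_weight H u1 v1 m1 N1 * density_weight H u2 v2 m2 N2 \<le> density_weight H u v (m1 + m2) (N1 + N2)"
proof (cases "density_weight H u1 v1 m1 N1 * density_weight H u2 v2 m2 N2 = 0")
  case False
  define x y z where "x = real m1 / real N1" and "y = real m2 / real N2"
    and "z = real (m1 + m2) / real (N1 + N2)"
  have in_window: "u1 \<le> x" "x \<le> v1" "H x \<noteq> -\<infinity>" "u2 \<le> y" "y \<le> v2" "H y \<noteq> -\<infinity>"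
    using False by (auto simp: density_weight_def x_def y_def split: if_splits)
  have N: "real N1 > 0" "real N2 > 0" using m1 m2 by auto
  have xyz: "x \<in> {0..1}" "y \<in> {0..1}" "z \<in> {0..1}" using m1 m2 by (auto simp: x_def y_def z_def)
  obtain p q where p: "H x = ereal p" and q: "H y = ereal q"
    using in_window not_pinf xyz by (cases "H x"; cases "H y") auto
  have "(real N1 * x + real N2 * y) / (real N1 + real N2) = z" using N by (simp add: x_def y_def z_def)
  then have Hz: "ereal ((real N1 * p + real N2 * q) / (real N1 + real N2)) \<le> H z"
    using ereal_concave_on_weighted_mean[OF conc xyz(1) p xyz(2) q N] by simp
  then obtain r where r: "H z = ereal r" using not_pinf[OF xyz(3)] by (cases "H z") auto
  have "real N1 * p + real N2 * q \<le> real (N1 + N2) * r"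
    using Hz r N by (simp add: divide_le_eq mult.commute)
  moreover have "u \<le> z" "z \<le> v" using window in_window unfolding x_def y_def z_def by auto
  ultimately show ?thesis
    using in_window p q r by (simp add: density_weight_def x_def y_def z_def exp_add[symmetric])
next
  case True
  then show ?thesis by (metis density_weight_nonneg)
qed

lemma Psi_fun_le_density_weight:
  "Q m N \<le> c \<Longrightarrow> m \<le> N \<Longrightarrow> N \<ge> 1 \<Longrightarrow> Psi_fun Q H m N \<le> c * density_weight H 0 1 m N"
  by (auto simp: Psi_fun_def density_weight_def intro: mult_right_mono)

lemma density_weight_le_Psi_fun:
  "0 \<le> Q m N \<Longrightarrow> (u \<le> real m / real N \<Longrightarrow> real m / real N \<le> v \<Longrightarrow> c \<le> Q m N)
    \<Longrightarrow> c * density_weight H u v m N \<le> Psi_fun Q H m N"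
  by (auto simp: Psi_fun_def density_weight_def intro: mult_right_mono)

lemma half_density_bounds:
  assumes "N \<ge> 2"
  shows "N div 2 \<in> {1..<N}" "1 / 3 \<le> real (N div 2) / real N" "real (N div 2) / real N \<le> 1 / 2"
proof -
  have "2 * (N div 2) \<le> N" "N \<le> 2 * (N div 2) + 1" "N div 2 \<ge> 1" using assms by simp_all
  then have "2 * (N div 2) \<le> N" "N \<le> 3 * (N div 2)" "N div 2 \<ge> 1" by linarith+
  then have "real (2 * (N div 2)) \<le> real N" "real N \<le> real (3 * (N div 2))" "N div 2 \<ge> 1"
    by (simp_all only: of_nat_le_iff)
  then show "N div 2 \<in> {1..<N}" "1 / 3 \<le> real (N div 2) / real N" "real (N div 2) / real N \<le> 1 / 2"
    using assms by (auto simp: field_simps)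
qed

section \<open>Asymptotic tools\<close>

lemma superadditive_iterate:
  fixes s :: "nat \<Rightarrow> real"
  assumes super: "\<And>n m. n \<ge> n0 \<Longrightarrow> m \<ge> n0 \<Longrightarrow> s n + s m \<le> s (n + m)"
    and "M \<ge> n0" and "r \<ge> n0"
  shows "real k * s M + s r \<le> s (k * M + r)"
proof (induction k)
  case (Suc k)
  have "s M + s (k * M + r) \<le> s (M + (k * M + r))" using assms by (intro super) auto
  then show ?case using Suc by (simp add: algebra_simps)
qed simp

lemma superadditive_mult:
  fixes s :: "nat \<Rightarrow> real"
  assumes super: "\<And>n m. n \<ge> n0 \<Longrightarrow> m \<ge> n0 \<Longrightarrow> s n + s m \<le> s (n + m)"
    and "M \<ge> n0" and "k \<ge> 1"
  shows "real k * s M \<le> s (k * M)"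
proof -
  have "real (k - 1) * s M + s M \<le> s ((k - 1) * M + M)"
    using assms(2) by (intro superadditive_iterate[OF super]) auto
  moreover have "(k - 1) * M + M = k * M" "real (k - 1) * s M + s M = real k * s M"
    using assms(3) by (auto simp: algebra_simps of_nat_diff)
  ultimately show ?thesis by simp
qed

lemma superadditive_eventually_ge:
  fixes s :: "nat \<Rightarrow> real"
  assumes super: "\<And>n m. n \<ge> n0 \<Longrightarrow> m \<ge> n0 \<Longrightarrow> s n + s m \<le> s (n + m)"
    and M: "M \<ge> n0" "M \<ge> 1" and \<epsilon>: "\<epsilon> > 0"
  shows "eventually (\<lambda>N. s M / real M - \<epsilon> \<le> s N / real N) sequentially"
proof -
  define x where "x = s M / real M"
  define C where "C = real (n0 + M) * \<bar>x\<bar> + (\<Sum>r<n0 + M. \<bar>s r\<bar>)"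
  have linear_bound: "real N * x - C \<le> s N" if N: "N \<ge> n0" for N
  proof -
    define k where "k = (N - n0) div M"
    define r where "r = n0 + (N - n0) mod M"
    have N_eq: "N = k * M + r" using N by (simp add: k_def r_def)
    have r: "n0 \<le> r" "r < n0 + M" using M by (auto simp: r_def)
    have "\<bar>s r\<bar> \<le> (\<Sum>r<n0 + M. \<bar>s r\<bar>)" using r by (intro member_le_sum) auto
    moreover have "real r * x \<le> real r * \<bar>x\<bar>" by (intro mult_left_mono) auto
    moreover have "real r * \<bar>x\<bar> \<le> real (n0 + M) * \<bar>x\<bar>" using r by (intro mult_right_mono) auto
    moreover have "real k * s M + s r \<le> s N"
      using superadditive_iterate[OF super M(1) r(1)] N_eq by simp
    moreover have "real N * x = real k * s M + real r * x"
      using M by (simp add: N_eq x_def algebra_simps)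
    ultimately show ?thesis unfolding C_def by linarith
  qed
  have "(\<lambda>N. x - C / real N) \<longlonglongrightarrow> x - 0"
    by (intro tendsto_diff tendsto_const lim_const_over_n)
  then have "eventually (\<lambda>N. x - \<epsilon> < x - C / real N) sequentially"
    by (rule order_tendstoD) (use \<epsilon> in simp)
  then show ?thesis
    using eventually_ge_at_top[of "max n0 1"]
  proof eventually_elim
    case (elim N)
    then have "x - C / real N = (real N * x - C) / real N" by (simp add: field_simps)
    also have "\<dots> \<le> s N / real N" using elim linear_bound by (intro divide_right_mono) auto
    finally show ?case using elim unfolding x_def by linarith
  qed
qed

lemma tendsto_ln_pmf_over_n:
  fixes p :: "nat pmf"
  assumes tail: "(\<lambda>n. pmf p n) \<sim>[at_top] (\<lambda>n. C * real n powr a)" and C: "C > 0"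
  shows "(\<lambda>n. ln (pmf p n) / real n) \<longlonglongrightarrow> 0"
proof (rule tendsto_sandwich)
  define l where "l n = ln (C / 2) / real n + a * (ln (real n) / real n)" for n :: nat
  have "l \<longlonglongrightarrow> 0 + a * 0"
    unfolding l_def by (intro tendsto_add tendsto_mult tendsto_const lim_const_over_n lim_ln_over_n)
  then show "l \<longlonglongrightarrow> 0" by simp
  have "ln (pmf p n) \<le> 0" for n
    using pmf_nonneg[of p n] pmf_le_1[of p n] by (cases "pmf p n = 0") auto
  then show "eventually (\<lambda>n. ln (pmf p n) / real n \<le> 0) sequentially"
    by (intro always_eventually allI divide_nonpos_nonneg) auto
  have "eventually (\<lambda>n. 1 / 2 * norm (C * real n powr a) \<le> norm (pmf p n)) at_top"
    by (rule asymp_equiv_imp_eventually_ge[OF tail]) simp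
  then show "eventually (\<lambda>n. l n \<le> ln (pmf p n) / real n) sequentially"
    using eventually_gt_at_top[of "0::nat"]
  proof eventually_elim
    case (elim n)
    have pos: "0 < C / 2 * real n powr a" using C elim(2) by simp
    moreover have "C / 2 * real n powr a \<le> pmf p n" using elim(1) C by simp
    ultimately have "ln (C / 2 * real n powr a) \<le> ln (pmf p n)" by (intro ln_mono)
    moreover have "ln (C / 2 * real n powr a) = ln (C / 2) + a * ln (real n)"
      using C elim(2) by (subst ln_mult_pos) (auto simp: ln_powr)
    moreover have "l n = (ln (C / 2) + a * ln (real n)) / real n" by (simp add: l_def add_divide_distrib)
    ultimately show ?case by (simp add: divide_right_mono)
  qed
qed simp

lemma tendsto_real_of_ereal_at_inverse_nat:
  assumes cont: "continuous_on {0..1} H" and H0: "H 0 = ereal c"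
    and not_minf: "\<And>x. x \<in> {0<..<1} \<Longrightarrow> H x \<noteq> -\<infinity>" and not_pinf: "\<And>x. x \<in> {0..1} \<Longrightarrow> H x \<noteq> \<infinity>"
  shows "(\<lambda>k. real_of_ereal (H (1 / real k))) \<longlonglongrightarrow> c"
proof -
  have "filterlim (\<lambda>k. 1 / real k) (at 0 within {0..1}) sequentially"
    unfolding filterlim_at
  proof
    show "eventually (\<lambda>k. 1 / real k \<in> {0..1} \<and> 1 / real k \<noteq> 0) sequentially"
      unfolding eventually_sequentially by (intro exI[of _ 1]) auto
  qed (rule lim_const_over_n)
  moreover have "(H \<longlongrightarrow> H 0) (at 0 within {0..1})"
    using cont unfolding continuous_on_def by auto
  ultimately have "(\<lambda>k. H (1 / real k)) \<longlonglongrightarrow> ereal c"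
    using filterlim_compose H0 by fastforce
  moreover have "eventually (\<lambda>k. ereal (real_of_ereal (H (1 / real k))) = H (1 / real k)) sequentially"
    using eventually_ge_at_top[of "2::nat"]
  proof eventually_elim
    case (elim k)
    then have "1 / real k \<in> {0<..<1}" by (auto simp: field_simps)
    then show ?case using not_minf not_pinf[of "1 / real k"] by (cases "H (1 / real k)") auto
  qed
  ultimately have "(\<lambda>k. ereal (real_of_ereal (H (1 / real k)))) \<longlonglongrightarrow> ereal c"
    by (simp add: tendsto_cong)
  then show ?thesis by (simp add: lim_ereal)
qed

section \<open>The free energy of the pinning model\<close>

locale pinning_model = iid_disorder \<mu> for \<mu> +
  fixes Kp :: "nat pmf" and H :: "real \<Rightarrow> ereal" and Q :: "nat \<Rightarrow> nat \<Rightarrow> real" and \<beta> h :: real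
  assumes K_zero: "pmf Kp 0 = 0"
    and K_pos: "\<And>n. n \<ge> 1 \<Longrightarrow> pmf Kp n > 0"
    and H_concave: "ereal_concave_on {0..1} H"
    and H_not_pinf: "\<And>x. x \<in> {0..1} \<Longrightarrow> H x \<noteq> \<infinity>"
    and H_real: "\<And>x. x \<in> {0<..<1} \<Longrightarrow> H x \<noteq> -\<infinity>"
    and H_cont: "continuous_on {0..1} H"
    and Q_nonneg: "\<And>m N. Q m N \<ge> 0"
    and Q_upper: "\<And>b. b > 0 \<Longrightarrow> \<exists>c. \<forall>N m. m \<le> N \<longrightarrow> Q m N \<le> c * exp (b * real N)"
    and Q_lower: "\<And>u v b. 0 < u \<Longrightarrow> u < v \<Longrightarrow> v < 1 \<Longrightarrow> b > 0 \<Longrightarrow>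
        \<exists>c>0. \<forall>N m. 1 \<le> m \<and> m \<le> N \<and> u \<le> real m / real N \<and> real m / real N \<le> v
          \<longrightarrow> Q m N \<ge> c * exp (- b * real N)"
begin

abbreviation mean_log_Z_window :: "real \<Rightarrow> real \<Rightarrow> nat \<Rightarrow> real" where
  "mean_log_Z_window u v N \<equiv> mean_log_partition Kp \<beta> h (density_weight H u v) N"

abbreviation mean_log_Z :: "nat \<Rightarrow> real" where
  "mean_log_Z N \<equiv> mean_log_partition Kp \<beta> h (Psi_fun Q H) N"

definition reference_free_energy :: real where
  "reference_free_energy = (SUP N\<in>{2..}. mean_log_Z_window 0 1 N / real N)"

lemma Psi_fun_nonneg: "0 \<le> Psi_fun Q H m N"
  using Q_nonneg by (simp add: Psi_fun_def)

lemma has_positive_termI: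
  assumes "m \<in> {1..N}" and "0 < G m N"
  shows "has_positive_term Kp G N"
proof -
  obtain g where g: "g \<in> compositions N" "length g = m"
    using exists_composition_of_length[OF assms(1)] by blast
  then have "0 < comp_weight Kp g" using K_pos by (intro comp_weight_pos) (auto simp: compositions_def)
  then have "0 < comp_weight Kp g * G (length g) N" using g(2) assms(2) by simp
  then show ?thesis using g(1) unfolding has_positive_term_def by blast
qed

lemma has_positive_term_window:
  assumes "N \<ge> 2" "u \<le> 1 / 3" "1 / 2 \<le> v"
  shows "has_positive_term Kp (density_weight H u v) N"
proof (rule has_positive_termI)
  have m: "N div 2 \<in> {1..<N}" "1 / 3 \<le> real (N div 2) / real N" "real (N div 2) / real N \<le> 1 / 2"
    using half_density_bounds[OF assms(1)] by auto
  then show "N div 2 \<in> {1..N}" by simp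
  show "0 < density_weight H u v (N div 2) N"
  proof (rule density_weight_pos)
    show "u \<le> real (N div 2) / real N" "real (N div 2) / real N \<le> v" using m assms by linarith+
    show "H (real (N div 2) / real N) \<noteq> -\<infinity>" using m by (intro H_real) (auto simp: field_simps)
  qed
qed

lemma has_positive_term_Psi:
  assumes "N \<ge> 2"
  shows "has_positive_term Kp (Psi_fun Q H) N"
proof (rule has_positive_termI)
  have m: "1 \<le> N div 2 \<and> N div 2 \<le> N \<and> 1 / 3 \<le> real (N div 2) / real N
      \<and> real (N div 2) / real N \<le> 1 / 2"
    using half_density_bounds[OF assms] by auto
  then show "N div 2 \<in> {1..N}" by simp
  obtain c where "c > 0" and c: "\<forall>N m. 1 \<le> m \<and> m \<le> N \<and> 1/3 \<le> real m / real N \<and> real m / real N \<le> 1/2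
      \<longrightarrow> Q m N \<ge> c * exp (- 1 * real N)"
    using Q_lower[of "1/3" "1/2" 1] by auto
  then have "0 < c * exp (- 1 * real N)" "c * exp (- 1 * real N) \<le> Q (N div 2) N"
    using m by simp_all
  moreover have "H (real (N div 2) / real N) \<noteq> -\<infinity>" using m by (intro H_real) auto
  ultimately show "0 < Psi_fun Q H (N div 2) N" by (simp add: Psi_fun_def)
qed

lemma window_superadditive:
  assumes "u \<le> 1 / 3" "1 / 2 \<le> v" "N1 \<ge> 2" "N2 \<ge> 2"
  shows "mean_log_Z_window u v N1 + mean_log_Z_window u v N2 \<le> mean_log_Z_window u v (N1 + N2)"
proof (rule mean_log_partition_superadditive)
  fix m1 m2 assume "m1 \<in> {1..N1}" "m2 \<in> {1..N2}"
  then show "density_weight H u v m1 N1 * density_weight H u v m2 N2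
      \<le> density_weight H u v (m1 + m2) (N1 + N2)"
    using assms(3,4)
    by (intro density_weight_supermultiplicative[OF H_concave H_not_pinf] mediant_in_interval) auto
qed (use assms in \<open>simp_all add: density_weight_nonneg has_positive_term_window\<close>)

lemma H_bounded_above: "\<exists>c. \<forall>x\<in>{0..1}. H x \<le> ereal c"
proof -
  obtain x0 where x0: "x0 \<in> {0..1}" "\<forall>y\<in>{0..1}. H y \<le> H x0"
    using continuous_attains_sup[OF compact_Icc _ H_cont] by auto
  have "H x0 \<le> ereal (real_of_ereal (H x0))"
    using H_not_pinf[OF x0(1)] by (cases "H x0") auto
  then show ?thesis using x0(2) by (blast intro: order_trans)
qed

lemma reference_linear_bound: "\<exists>C. \<forall>N\<ge>2. mean_log_Z_window 0 1 N \<le> real N * C"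
proof -
  obtain c where c: "\<forall>x\<in>{0..1}. H x \<le> ereal c" using H_bounded_above by auto
  have weight_le: "density_weight H 0 1 m N \<le> exp (real N * c)" if "m \<le> N" for m N
  proof -
    have x: "real m / real N \<in> {0..1}" using that by (cases "N = 0") auto
    then have "H (real m / real N) \<le> ereal c" using c by blast
    then have "real_of_ereal (H (real m / real N)) \<le> c" if "H (real m / real N) \<noteq> -\<infinity>"
      using H_not_pinf[OF x] that by (cases "H (real m / real N)") auto
    then show ?thesis by (simp add: density_weight_def mult_left_mono)
  qed
  have "mean_log_Z_window 0 1 N \<le> real N * (c + (\<integral>x. \<bar>\<beta> * x + h\<bar> \<partial>\<mu>))" if N: "N \<ge> 2" for N
  proof -
    let ?S = "\<Sum>g\<in>compositions N. comp_weight Kp g * density_weight H 0 1 (length g) N"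
    have pos: "has_positive_term Kp (density_weight H 0 1) N" using N by (intro has_positive_term_window) auto
    then obtain g where "g \<in> compositions N" "0 < comp_weight Kp g * density_weight H 0 1 (length g) N"
      unfolding has_positive_term_def by blast
    moreover have "comp_weight Kp g * density_weight H 0 1 (length g) N \<le> ?S"
      using \<open>g \<in> compositions N\<close>
      by (intro member_le_sum) (simp_all add: finite_compositions comp_weight_nonneg density_weight_nonneg)
    ultimately have "0 < ?S" by linarith
    have "?S \<le> (\<Sum>g\<in>compositions N. comp_weight Kp g * exp (real N * c))"
      using weight_le length_compositions_le comp_weight_nonneg by (intro sum_mono mult_left_mono) auto
    also have "\<dots> \<le> exp (real N * c)"
      using sum_comp_weight_le_1[OF K_zero, of N] by (simp add: sum_distrib_right[symmetric])
    finally have "ln ?S \<le> real N * c" using ln_mono[OF _ \<open>0 < ?S\<close>] by fastforce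
    then show ?thesis
      using mean_log_partition_le[OF pos density_weight_nonneg, of \<beta> h] by (simp add: algebra_simps)
  qed
  then show ?thesis by blast
qed

lemma bdd_above_reference: "bdd_above ((\<lambda>N. mean_log_Z_window 0 1 N / real N) ` {2..})"
proof -
  obtain C where "\<forall>N\<ge>2. mean_log_Z_window 0 1 N \<le> real N * C" using reference_linear_bound by auto
  then have "mean_log_Z_window 0 1 N / real N \<le> C" if "N \<ge> 2" for N
    using that by (simp add: divide_le_eq mult.commute)
  then show ?thesis by (auto simp: bdd_above_def)
qed

lemma reference_le: "N \<ge> 2 \<Longrightarrow> mean_log_Z_window 0 1 N / real N \<le> reference_free_energy"
  unfolding reference_free_energy_def by (rule cSup_upper[OF _ bdd_above_reference]) auto

text \<open>Appending one jump of length 2 pushes every contact density into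
  [1/(M+2), (M+1)/(M+2)], a window on which Q is bounded below.\<close>

lemma window_append_jump:
  assumes M: "M \<ge> 2"
  shows "mean_log_Z_window 0 1 M + (ln (pmf Kp 2 * density_weight H (1/2) (1/2) 1 2) + h)
    \<le> mean_log_Z_window (1 / real (M + 2)) (real (M + 1) / real (M + 2)) (M + 2)"
proof -
  let ?jump = "density_weight H (1/2) (1/2)"
  have jump: "[2] \<in> compositions 2" by (simp add: compositions_def)
  have "0 < ?jump 1 2" using H_real[of "1/2"] by (intro density_weight_pos) auto
  then have jump_pos: "0 < comp_weight Kp [2] * ?jump (length [2]) 2"
    using K_pos[of 2] by (simp add: comp_weight_def)
  then have jump_term: "has_positive_term Kp ?jump 2"
    using jump unfolding has_positive_term_def by blast
  have "ln (pmf Kp 2 * ?jump 1 2) + h \<le> mean_log_partition Kp \<beta> h ?jump 2"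
    using mean_log_partition_ge[where G = ?jump, OF jump density_weight_nonneg jump_pos]
    by (simp add: comp_weight_def)
  moreover have "mean_log_Z_window 0 1 M + mean_log_partition Kp \<beta> h ?jump 2
      \<le> mean_log_Z_window (1 / real (M + 2)) (real (M + 1) / real (M + 2)) (M + 2)"
  proof (rule mean_log_partition_superadditive)
    fix m1 m2 :: nat assume m: "m1 \<in> {1..M}" "m2 \<in> {1..2}"
    show "density_weight H 0 1 m1 M * ?jump m2 2
      \<le> density_weight H (1 / real (M + 2)) (real (M + 1) / real (M + 2)) (m1 + m2) (M + 2)"
    proof (rule density_weight_supermultiplicative[OF H_concave H_not_pinf m])
      assume "1/2 \<le> real m2 / real 2" "real m2 / real 2 \<le> 1/2"
      then have "m2 = 1" by simp
      then have "1 \<le> real (m1 + m2)" "real (m1 + m2) \<le> real (M + 1)" using m(1) by auto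
      then show "1 / real (M + 2) \<le> real (m1 + m2) / real (M + 2)
          \<and> real (m1 + m2) / real (M + 2) \<le> real (M + 1) / real (M + 2)"
        by (auto intro: divide_right_mono)
    qed
  qed (use M jump_term in \<open>auto simp: density_weight_nonneg has_positive_term_window\<close>)
  ultimately show ?thesis by simp
qed

lemma reference_superadditive:
  "n \<ge> 2 \<Longrightarrow> m \<ge> 2 \<Longrightarrow> mean_log_Z_window 0 1 n + mean_log_Z_window 0 1 m \<le> mean_log_Z_window 0 1 (n + m)"
  by (rule window_superadditive) auto

lemma window_rate_approx:
  assumes \<epsilon>: "\<epsilon> > 0"
  obtains u v T where "0 < u" "u \<le> 1 / 3" "1 / 2 \<le> v" "v < 1" "T \<ge> 2"
    "reference_free_energy - \<epsilon> \<le> mean_log_Z_window u v T / real T"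
proof -
  define L where "L = reference_free_energy"
  define c0 where "c0 = ln (pmf Kp 2 * density_weight H (1/2) (1/2) 1 2) + h"
  have "L - \<epsilon> / 2 < Sup ((\<lambda>N. mean_log_Z_window 0 1 N / real N) ` {2..})"
    using \<epsilon> by (simp add: L_def reference_free_energy_def)
  then obtain M where M: "M \<ge> 2" and "L - \<epsilon> / 2 < mean_log_Z_window 0 1 M / real M"
    by (subst (asm) less_cSup_iff[OF _ bdd_above_reference]) auto
  then have rate_M: "real M * (L - \<epsilon> / 2) < mean_log_Z_window 0 1 M" by (simp add: field_simps)
  obtain k where k: "\<bar>2 * (L - \<epsilon>) - c0\<bar> < real k * (real M * \<epsilon> / 2)"
    using reals_Archimedean3[of "real M * \<epsilon> / 2"] M \<epsilon> by auto
  define M' where "M' = Suc k * M"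
  have M': "M' \<ge> 2" using M by (simp add: M'_def)
  have "real M' * (L - \<epsilon> / 2) = real (Suc k) * (real M * (L - \<epsilon> / 2))"
    by (simp add: M'_def algebra_simps)
  also have "\<dots> \<le> real (Suc k) * mean_log_Z_window 0 1 M"
    using rate_M by (intro mult_left_mono) auto
  also have "\<dots> \<le> mean_log_Z_window 0 1 M'"
    unfolding M'_def using reference_superadditive M by (rule superadditive_mult) simp_all
  finally have rate_M': "real M' * (L - \<epsilon> / 2) \<le> mean_log_Z_window 0 1 M'" .
  define T where "T = M' + 2"
  have "real T * (L - \<epsilon>) \<le> real M' * (L - \<epsilon> / 2) + c0"
  proof -
    have "2 * (L - \<epsilon>) - c0 < real k * (real M * \<epsilon> / 2)" using k abs_ge_self[of "2 * (L - \<epsilon>) - c0"] by linarith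
    also have "\<dots> \<le> real M' * \<epsilon> / 2" using \<epsilon> by (simp add: M'_def field_simps)
    finally show ?thesis by (simp add: T_def algebra_simps)
  qed
  also have "\<dots> \<le> mean_log_Z_window (1 / real T) (real (M' + 1) / real T) T"
    using rate_M' window_append_jump[OF M'] by (simp add: T_def c0_def)
  finally have "L - \<epsilon> \<le> mean_log_Z_window (1 / real T) (real (M' + 1) / real T) T / real T"
    by (simp add: T_def field_simps)
  moreover have "1 / real T \<le> 1 / 3" "1 / 2 \<le> real (M' + 1) / real T" "real (M' + 1) / real T < 1"
    using M' by (simp_all add: T_def field_simps)
  ultimately show ?thesis using that[of "1 / real T" "real (M' + 1) / real T" T] M' by (simp add: T_def L_def)
qed

lemma model_upper_bound:
  assumes b: "b > 0"
  obtains C where "\<And>N. N \<ge> 2 \<Longrightarrow> mean_log_Z N \<le> C + b * real N + mean_log_Z_window 0 1 N"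
proof -
  obtain c where c: "\<And>N m. m \<le> N \<Longrightarrow> Q m N \<le> c * exp (b * real N)" using Q_upper[OF b] by auto
  define c' where "c' = max c 1"
  have "mean_log_Z N \<le> ln c' + b * real N + mean_log_Z_window 0 1 N" if N: "N \<ge> 2" for N
  proof -
    define K where "K = c' * exp (b * real N)"
    have K: "0 < K" by (simp add: K_def c'_def)
    have "ln (inverse K) + mean_log_Z N \<le> mean_log_Z_window 0 1 N"
    proof (rule mean_log_partition_scaled_mono)
      fix m assume m: "m \<in> {1..N}"
      have "c * exp (b * real N) \<le> K" unfolding K_def c'_def by (intro mult_right_mono) auto
      then have "Q m N \<le> K" using c[of m N] m by simp
      then have "Psi_fun Q H m N \<le> K * density_weight H 0 1 m N"
        using m by (intro Psi_fun_le_density_weight) auto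
      then show "inverse K * Psi_fun Q H m N \<le> density_weight H 0 1 m N"
        using K by (simp add: field_simps)
    qed (use N K in \<open>simp_all add: has_positive_term_Psi Psi_fun_nonneg density_weight_nonneg\<close>)
    moreover have "ln K = ln c' + b * real N" by (simp add: K_def c'_def ln_mult_pos)
    ultimately show ?thesis using K by (simp add: ln_inverse)
  qed
  then show ?thesis using that by blast
qed

lemma model_lower_bound:
  assumes u: "0 < u" "u \<le> 1 / 3" and v: "1 / 2 \<le> v" "v < 1" and b: "b > 0"
  obtains C where "\<And>N. N \<ge> 2 \<Longrightarrow> C - b * real N + mean_log_Z_window u v N \<le> mean_log_Z N"
proof -
  obtain c where c: "c > 0" and cQ: "\<forall>N m. 1 \<le> m \<and> m \<le> N \<and> u \<le> real m / real N \<and> real m / real N \<le> v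
      \<longrightarrow> Q m N \<ge> c * exp (- b * real N)"
    using Q_lower[OF u(1) _ v(2) b] u v by fastforce
  have "ln c - b * real N + mean_log_Z_window u v N \<le> mean_log_Z N" if N: "N \<ge> 2" for N
  proof -
    have "ln (c * exp (- b * real N)) + mean_log_Z_window u v N \<le> mean_log_Z N"
    proof (rule mean_log_partition_scaled_mono)
      fix m assume "m \<in> {1..N}"
      then show "c * exp (- b * real N) * density_weight H u v m N \<le> Psi_fun Q H m N"
        using cQ by (intro density_weight_le_Psi_fun Q_nonneg) auto
    qed (use N u v c in \<open>simp_all add: has_positive_term_window Psi_fun_nonneg density_weight_nonneg\<close>)
    then show ?thesis using c by (simp add: ln_mult_pos)
  qed
  then show ?thesis using that by blast
qed

lemma eventually_mean_log_Z_less: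
  assumes "reference_free_energy < a"
  shows "eventually (\<lambda>N. mean_log_Z N / real N < a) sequentially"
proof -
  define b where "b = (a - reference_free_energy) / 2"
  have b: "b > 0" using assms by (simp add: b_def)
  obtain C where C: "\<And>N. N \<ge> 2 \<Longrightarrow> mean_log_Z N \<le> C + b * real N + mean_log_Z_window 0 1 N"
    using model_upper_bound[OF b] by blast
  have "(\<lambda>N. C / real N) \<longlonglongrightarrow> 0" by (rule lim_const_over_n)
  then have "eventually (\<lambda>N. C / real N < b) sequentially" using b by (rule order_tendstoD)
  then show ?thesis using eventually_ge_at_top[of 2]
  proof eventually_elim
    case (elim N)
    then have "mean_log_Z N / real N \<le> (C + b * real N + mean_log_Z_window 0 1 N) / real N"
      using C by (intro divide_right_mono) auto
    also have "\<dots> = C / real N + b + mean_log_Z_window 0 1 N / real N"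
      using elim by (simp add: field_simps)
    also have "\<dots> \<le> C / real N + b + reference_free_energy" using reference_le elim by simp
    also have "\<dots> < b + b + reference_free_energy" using elim by simp
    also have "\<dots> = a" by (simp add: b_def)
    finally show ?case .
  qed
qed

lemma eventually_mean_log_Z_greater:
  assumes "a < reference_free_energy"
  shows "eventually (\<lambda>N. a < mean_log_Z N / real N) sequentially"
proof -
  define \<epsilon> where "\<epsilon> = (reference_free_energy - a) / 4"
  have \<epsilon>: "\<epsilon> > 0" using assms by (simp add: \<epsilon>_def)
  obtain u v T where uv: "0 < u" "u \<le> 1 / 3" "1 / 2 \<le> v" "v < 1" and T: "T \<ge> 2"
    and close: "reference_free_energy - \<epsilon> \<le> mean_log_Z_window u v T / real T"
    using window_rate_approx[OF \<epsilon>] by blast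
  obtain C where C: "\<And>N. N \<ge> 2 \<Longrightarrow> C - \<epsilon> * real N + mean_log_Z_window u v N \<le> mean_log_Z N"
    using model_lower_bound[OF uv \<epsilon>] by blast
  have "eventually (\<lambda>N. mean_log_Z_window u v T / real T - \<epsilon> \<le> mean_log_Z_window u v N / real N) sequentially"
    using window_superadditive[OF uv(2,3)] T \<epsilon> by (intro superadditive_eventually_ge) auto
  moreover have "eventually (\<lambda>N. - \<epsilon> < C / real N) sequentially"
    by (rule order_tendstoD[OF lim_const_over_n]) (use \<epsilon> in simp)
  ultimately show ?thesis using eventually_ge_at_top[of 2]
  proof eventually_elim
    case (elim N)
    have "a = reference_free_energy - \<epsilon> - \<epsilon> - \<epsilon> - \<epsilon>" by (simp add: \<epsilon>_def field_simps)
    also have "\<dots> \<le> mean_log_Z_window u v T / real T - \<epsilon> - \<epsilon> - \<epsilon>" using close by simp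
    also have "\<dots> \<le> mean_log_Z_window u v N / real N - \<epsilon> - \<epsilon>" using elim by simp
    also have "\<dots> < C / real N - \<epsilon> + mean_log_Z_window u v N / real N" using elim by simp
    also have "\<dots> = (C - \<epsilon> * real N + mean_log_Z_window u v N) / real N"
      using elim by (simp add: field_simps)
    also have "\<dots> \<le> mean_log_Z N / real N" using C elim by (intro divide_right_mono) auto
    finally show ?case .
  qed
qed

lemma tendsto_mean_log_Z: "(\<lambda>N. mean_log_Z N / real N) \<longlonglongrightarrow> reference_free_energy"
  by (rule order_tendstoI) (simp_all add: eventually_mean_log_Z_less eventually_mean_log_Z_greater)

lemma free_energy_eq_reference: "free_energy Kp \<mu> (Psi_fun Q H) \<beta> h = reference_free_energy"
proof -
  have "(\<lambda>N. \<integral>\<omega>. ln (partition_fun Kp (Psi_fun Q H) \<beta> h \<omega> N) / real N \<partial>disorder_law \<mu>)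
      = (\<lambda>N. mean_log_Z N / real N)"
    by (simp add: partition_fun_eq_comp_partition[OF K_zero] disorder_law_def mean_log_partition_def)
  then show ?thesis unfolding free_energy_def using tendsto_mean_log_Z by (simp add: limI)
qed

lemma H0_le_reference_free_energy:
  assumes K_subexp: "(\<lambda>k. ln (pmf Kp k) / real k) \<longlonglongrightarrow> 0"
  shows "H 0 \<le> ereal reference_free_energy"
proof (cases "H 0")
  case (real c)
  define r where "r k = real_of_ereal (H (1 / real k))" for k :: nat
  have "(\<lambda>k. ln (pmf Kp k) / real k + r k + h / real k) \<longlonglongrightarrow> 0 + c + 0"
    unfolding r_def
    by (intro tendsto_add K_subexp lim_const_over_n tendsto_real_of_ereal_at_inverse_nat[OF H_cont real]
        H_real H_not_pinf)
  moreover have "ln (pmf Kp k) / real k + r k + h / real k \<le> reference_free_energy" if k: "k \<ge> 2" for k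
  proof -
    have single: "[k] \<in> compositions k" using k by (simp add: compositions_def)
    have "1 / real k \<in> {0<..<1}" using k by (auto simp: field_simps)
    then have weight: "density_weight H 0 1 (length [k]) k = exp (real k * r k)"
      using H_real by (simp add: density_weight_def r_def)
    have pmf_pos: "0 < pmf Kp k" using K_pos k by simp
    then have "0 < comp_weight Kp [k] * density_weight H 0 1 (length [k]) k"
      unfolding weight by (simp add: comp_weight_def)
    then have "ln (comp_weight Kp [k] * density_weight H 0 1 (length [k]) k) + h * real (length [k])
        \<le> mean_log_Z_window 0 1 k"
      by (rule mean_log_partition_ge[where G = "density_weight H 0 1", OF single density_weight_nonneg])
    then have "ln (pmf Kp k) + real k * r k + h \<le> mean_log_Z_window 0 1 k"
      unfolding weight using pmf_pos by (simp add: comp_weight_def ln_mult_pos)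
    then have "(ln (pmf Kp k) + real k * r k + h) / real k \<le> mean_log_Z_window 0 1 k / real k"
      using k by (intro divide_right_mono) simp_all
    also have "\<dots> \<le> reference_free_energy" using reference_le k by simp
    finally show ?thesis using k by (simp add: add_divide_distrib)
  qed
  ultimately have "c \<le> reference_free_energy"
    by (intro LIMSEQ_le_const2) (auto simp: eventually_sequentially)
  then show ?thesis using real by simp
qed (use H_not_pinf[of 0] in simp_all)

end

theorem propositionB2:
  fixes Kp :: "nat pmf" and C\<^sub>K \<alpha> :: real
    and \<mu> :: "real measure"
    and H :: "real \<Rightarrow> ereal" and Q :: "nat \<Rightarrow> nat \<Rightarrow> real"
    and \<beta> h :: real
  assumes K_zero: "pmf Kp 0 = 0"
    and K_pos: "\<And>n. n \<ge> 1 \<Longrightarrow> pmf Kp n > 0"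
    and \<alpha>_pos: "\<alpha> > 0" and CK_pos: "C\<^sub>K > 0"
    and K_tail: "(\<lambda>n. pmf Kp n) \<sim>[at_top] (\<lambda>n. C\<^sub>K * real n powr (-(1 + \<alpha>)))"
    and \<mu>_prob: "prob_space \<mu>" and \<mu>_borel: "sets \<mu> = sets borel"
    and \<mu>_expmom: "\<And>s. integrable \<mu> (\<lambda>x. exp (s * x))"
    and \<mu>_mean: "(\<integral>x. x \<partial>\<mu>) = 0"
    and \<mu>_var: "(\<integral>x. x\<^sup>2 \<partial>\<mu>) = 1"
    and H_concave: "ereal_concave_on {0..1} H"
    and H_not_pinf: "\<And>x. x \<in> {0..1} \<Longrightarrow> H x \<noteq> \<infinity>"
    and H_real: "\<And>x. x \<in> {0<..<1} \<Longrightarrow> H x \<noteq> -\<infinity>"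
    and H_analytic: "real_analytic_on {0<..<1} (\<lambda>x. real_of_ereal (H x))"
    and H_cont: "continuous_on {0..1} H"
    and Q_nonneg: "\<And>m N. Q m N \<ge> 0"
    and Q_upper: "\<And>b. b > 0 \<Longrightarrow> \<exists>c. \<forall>N m. m \<le> N \<longrightarrow> Q m N \<le> c * exp (b * real N)"
    and Q_lower: "\<And>u v b. 0 < u \<Longrightarrow> u < v \<Longrightarrow> v < 1 \<Longrightarrow> b > 0 \<Longrightarrow>
        \<exists>c>0. \<forall>N m. 1 \<le> m \<and> m \<le> N \<and> u \<le> real m / real N \<and> real m / real N \<le> v
          \<longrightarrow> Q m N \<ge> c * exp (- b * real N)"
    and \<beta>_nonneg: "\<beta> \<ge> 0"
  shows "H 0 \<le> ereal (free_energy Kp \<mu> (Psi_fun Q H) \<beta> h)"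
proof -
  interpret pinning_model \<mu> Kp H Q \<beta> h
    unfolding pinning_model_def pinning_model_axioms_def iid_disorder_def
    using \<mu>_prob \<mu>_borel \<mu>_expmom \<mu>_mean K_zero K_pos H_concave H_not_pinf H_real H_cont
      Q_nonneg Q_upper Q_lower
    by blast
  have "(\<lambda>k. ln (pmf Kp k) / real k) \<longlonglongrightarrow> 0"
    using K_tail CK_pos by (rule tendsto_ln_pmf_over_n)
  then have "H 0 \<le> ereal reference_free_energy"
    by (rule H0_le_reference_free_energy)
  then show ?thesis by (simp add: free_energy_eq_reference)
qed

end
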